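(* Let $X$, $n_0$, $(c_i)$, $(s_{i,j})$ (hence $(n_i)$, $(d_i)$) be fixed, and let $E$ and $F$ be two point-evaluation data of sizes $(k^{(E)}_i)$ and $(k^{(F)}_i)$, both satisfying requirements (a) and (b), giving Villadsen algebras $A_E=A(X,(n_i),(k^{(E)}_i),E)$ and $A_F=A(X,(n_i),(k^{(F)}_i),F)$ with connecting maps $\phi^{(E)}_{i,j}$, $\phi^{(F)}_{i,j}$ and matrix sizes $m^{(E)}_i$, $m^{(F)}_i$. Assume that $\prod_{i\ge1}(n_i+k^{(E)}_i)=\prod_{i\ge1}(n_i+k^{(F)}_i)$ as supernatural numbers and that $$\lim_{i\to\infty}\frac{(n_1+k^{(E)}_1)\cdots(n_i+k^{(E)}_i)}{(n_1+k^{(F)}_1)\cdots(n_i+k^{(F)}_i)}=1.$$ Let $\delta_1>\delta_2>\cdots>0$ with $\sum_s\delta_s<1$. Then there are indices $1=i_0<i_1<i_2<\cdots$ and diagonal unital homomorphisms $\psi_s$, where for even $s$, $\psi_s:\mathrm{M}_{m^{(E)}_{i_s}}(\mathrm{C}(X^{d_{i_s}}))\to\mathrm{M}_{m^{(F)}_{i_{s+1}}}(\mathrm{C}(X^{d_{i_{s+1}}}))$, and for odd $s$, $\psi_s:\mathrm{M}_{m^{(F)}_{i_s}}(\mathrm{C}(X^{d_{i_s}}))\to\mathrm{M}_{m^{(E)}_{i_{s+1}}}(\mathrm{C}(X^{d_{i_{s+1}}}))$, such that: (1) for even $s$, $|\tau(\psi_{s+1}\circ\psi_s(h))-\tau(\phi^{(E)}_{i_s,i_{s+2}}(h))|<\delta_s$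 for all $h$ with $\|h\|\le1$ and all tracial states $\tau$ of $\mathrm{M}_{m^{(E)}_{i_{s+2}}}(\mathrm{C}(X^{d_{i_{s+2}}}))$; for odd $s$, the same with $\phi^{(F)}_{i_s,i_{s+2}}$ and $\mathrm{M}_{m^{(F)}_{i_{s+2}}}(\mathrm{C}(X^{d_{i_{s+2}}}))$; (2) for even $s$, the diagonal maps $\psi_{s+1}\circ\psi_s$ and $\phi^{(E)}_{i_s,i_{s+2}}$ have the same coordinate-projection part (so they differ only in their point-evaluation parts); for odd $s$, the same holds for $\psi_{s+1}\circ\psi_s$ and $\phi^{(F)}_{i_s,i_{s+2}}$.
   Context: Villadsen algebras. Let $X$ be a connected compact metrizable space (the seed space). The data consist of an integer $n_0\ge1$ and, for each $i\ge1$, integers $c_i\ge1$, $s_{i,1},\dots,s_{i,c_i}\ge1$, $k_i\ge1$, together with points $x_{i,1},\dots,x_{i,k_i}\in X^{d_i}$. Here $n_i:=s_{i,1}+\cdots+s_{i,c_i}$, $d_i:=c_1c_2\cdots c_{i-1}$ and $m_i:=n_0(n_1+k_1)\cdots(n_{i-1}+k_{i-1})$ (so $d_1=1$, $m_1=n_0$), and $E=(E_i)$ with $E_i=\{x_{i,1},\dots,x_{i,k_i}\}$. Write $X^{d_{i+1}}=(X^{d_i})^{c_i}$ with coordinate projections $\pi_1,\dots,\pi_{c_i}:X^{d_{i+1}}\to X^{d_i}$. The connecting map $\phi_i:\mathrm{M}_{m_i}(\mathrm{C}(X^{d_i}))\to\mathrm{M}_{m_{i+1}}(\mathrm{C}(X^{d_{i+1}}))$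 is the unital homomorphism $\phi_i(f)=\mathrm{diag}(\underbrace{f\circ\pi_1,\dots,f\circ\pi_1}_{s_{i,1}},\dots,\underbrace{f\circ\pi_{c_i},\dots,f\circ\pi_{c_i}}_{s_{i,c_i}},f(x_{i,1}),\dots,f(x_{i,k_i}))$, where $f(x)\in\mathrm{M}_{m_i}(\mathbb C)$ is regarded as a constant function. Put $\phi_{i,j}:=\phi_{j-1}\circ\cdots\circ\phi_i$ for $i<j$. It is required that (a) for each $i$, the union over $j\ge1$ of the images of $E_{i+j}\subseteq X^{d_{i+j}}=(X^{d_{i+1}})^{c_{i+1}\cdots c_{i+j-1}}$ under all coordinate projections $X^{d_{i+j}}\to X^{d_{i+1}}$ is dense in $X^{d_{i+1}}$; and (b) $\lim_{i\to\infty}\lim_{j\to\infty}\prod_{l=i}^{i+j}\frac{n_l}{n_l+k_l}=1$. The inductive limit is a unital simple C*-algebra, called a Villadsen algebra and denoted $A(X,(n_i),(k_i),E)$. Diagonal maps. A coordinate projection $X^{d'}\to X^{d}$ ($d\le d'$) is a map $(y_1,\dots,y_{d'})\mapsto(y_{\sigma(1)},\dots,y_{\sigma(d)})$ for an injective $\sigma:\{1,\dots,d\}\to\{1,\dots,d'\}$. A unital homomorphism $\psi:\mathrm{M}_m(\mathrm{C}(X^d))\to\mathrm{M}_{mr}(\mathrm{C}(X^{d'}))$ is diagonal if, up to conjugation by a permutation unitary, $\psi(f)=\mathrm{diag}(f\circ\lambda_1,\dots,f\circ\lambda_p,f(z_1),\dots,f(z_q))$ with $p+q=r$, each $\lambda_l$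 a coordinate projection $X^{d'}\to X^d$ and $z_l\in X^d$. The list $(\lambda_1,\dots,\lambda_p)$ (with multiplicity) is its coordinate-projection part and $(z_1,\dots,z_q)$ its point-evaluation part. *)

theory Defs
  imports "HOL-Analysis.Analysis" "HOL-Library.Multiset" "HOL-Library.Extended_Nat"
    "HOL-Computational_Algebra.Primes" "HOL-Combinatorics.Permutations"
begin

text \<open>Points of X^d are extensional functions on {..<d} (value undefined elsewhere),
  with the product topology on nat => 'a.  An element of M_m(C(X^d)) is a function
  y |-> (m x m complex matrix, given as nat => nat => complex), continuous on X^d,
  zero outside X^d and with zero entries outside {..<m} x {..<m}.\<close>

type_synonym 'a vmat = "(nat \<Rightarrow> 'a) \<Rightarrow> nat \<Rightarrow> nat \<Rightarrow> complex"

definition Xpow :: "'a set \<Rightarrow> nat \<Rightarrow> (nat \<Rightarrow> 'a) set" where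
  "Xpow X d = PiE {..<d} (\<lambda>_. X)"

definition MC :: "'a::topological_space set \<Rightarrow> nat \<Rightarrow> nat \<Rightarrow> 'a vmat set" where
  "MC X m d = {f. (\<forall>y. y \<notin> Xpow X d \<longrightarrow> f y = (\<lambda>_ _. 0))
      \<and> (\<forall>y a b. (m \<le> a \<or> m \<le> b) \<longrightarrow> f y a b = 0)
      \<and> (\<forall>a b. continuous_on (Xpow X d) (\<lambda>y. f y a b))}"

definition mc_add :: "'a vmat \<Rightarrow> 'a vmat \<Rightarrow> 'a vmat" where
  "mc_add f g = (\<lambda>y a b. f y a b + g y a b)"

definition mc_scale :: "complex \<Rightarrow> 'a vmat \<Rightarrow> 'a vmat" where
  "mc_scale c f = (\<lambda>y a b. c * f y a b)"

definition mc_mult :: "nat \<Rightarrow> 'a vmat \<Rightarrow> 'a vmat \<Rightarrow> 'a vmat" where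
  "mc_mult m f g = (\<lambda>y a b. \<Sum>q<m. f y a q * g y q b)"

definition mc_adj :: "'a vmat \<Rightarrow> 'a vmat" where
  "mc_adj f = (\<lambda>y a b. cnj (f y b a))"

definition mc_one :: "'a set \<Rightarrow> nat \<Rightarrow> nat \<Rightarrow> 'a vmat" where
  "mc_one X m d = (\<lambda>y a b. if y \<in> Xpow X d \<and> a = b \<and> a < m then 1 else 0)"

definition mat_norm :: "nat \<Rightarrow> (nat \<Rightarrow> nat \<Rightarrow> complex) \<Rightarrow> real" where
  "mat_norm m A = Sup {sqrt (\<Sum>a<m. (cmod (\<Sum>b<m. A a b * v b))\<^sup>2) | v.
                        (\<Sum>b<m. (cmod (v b))\<^sup>2) \<le> 1}"

definition mc_norm :: "'a set \<Rightarrow> nat \<Rightarrow> nat \<Rightarrow> 'a vmat \<Rightarrow> real" where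
  "mc_norm X m d h = Sup ((\<lambda>y. mat_norm m (h y)) ` Xpow X d)"

definition tracial_state :: "'a::topological_space set \<Rightarrow> nat \<Rightarrow> nat \<Rightarrow> ('a vmat \<Rightarrow> complex) \<Rightarrow> bool" where
  "tracial_state X m d \<tau> \<longleftrightarrow>
     (\<forall>f\<in>MC X m d. \<forall>g\<in>MC X m d. \<tau> (mc_add f g) = \<tau> f + \<tau> g)
   \<and> (\<forall>c. \<forall>f\<in>MC X m d. \<tau> (mc_scale c f) = c * \<tau> f)
   \<and> (\<forall>b\<in>MC X m d. Im (\<tau> (mc_mult m (mc_adj b) b)) = 0 \<and> Re (\<tau> (mc_mult m (mc_adj b) b)) \<ge> 0)
   \<and> \<tau> (mc_one X m d) = 1
   \<and> (\<forall>a\<in>MC X m d. \<forall>b\<in>MC X m d. \<tau> (mc_mult m a b) = \<tau> (mc_mult m b a))"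

definition cproj :: "nat \<Rightarrow> (nat \<Rightarrow> nat) \<Rightarrow> (nat \<Rightarrow> 'a) \<Rightarrow> (nat \<Rightarrow> 'a)" where
  "cproj d \<sigma> y = (\<lambda>q. if q < d then y (\<sigma> q) else undefined)"

definition diag_map :: "'a set \<Rightarrow> nat \<Rightarrow> nat \<Rightarrow> nat \<Rightarrow> (nat \<Rightarrow> nat) list \<Rightarrow> (nat \<Rightarrow> 'a) list
     \<Rightarrow> (nat \<Rightarrow> nat) \<Rightarrow> 'a vmat \<Rightarrow> 'a vmat" where
  "diag_map X m d d' lams zs \<pi> f =
     (\<lambda>y. if y \<in> Xpow X d' then
        (\<lambda>a b. if a < m * (length lams + length zs) \<and> b < m * (length lams + length zs)
                 \<and> \<pi> a div m = \<pi> b div m then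
           (if \<pi> a div m < length lams then f (cproj d (lams ! (\<pi> a div m)) y)
            else f (zs ! (\<pi> a div m - length lams))) (\<pi> a mod m) (\<pi> b mod m)
         else 0)
      else (\<lambda>_ _. 0))"

text \<open>psi : M_m(C(X^d)) -> M_m'(C(X^d')) is diagonal with coordinate-projection part
  Lam (a multiset of coordinate projections, each represented by its index map
  restricted to {..<d}); the permutation pi encodes conjugation by a permutation unitary.\<close>

definition diag_decomp :: "'a::topological_space set \<Rightarrow> nat \<Rightarrow> nat \<Rightarrow> nat \<Rightarrow> nat
     \<Rightarrow> ('a vmat \<Rightarrow> 'a vmat) \<Rightarrow> (nat \<Rightarrow> nat) multiset \<Rightarrow> bool" where
  "diag_decomp X m d m' d' \<psi> Lam \<longleftrightarrow>
     (\<exists>lams zs \<pi>. m' = m * (length lams + length zs)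
        \<and> (\<forall>\<sigma>\<in>set lams. \<sigma> \<in> {..<d} \<rightarrow> {..<d'} \<and> inj_on \<sigma> {..<d})
        \<and> set zs \<subseteq> Xpow X d
        \<and> \<pi> permutes {..<m'}
        \<and> (\<forall>f\<in>MC X m d. \<psi> f = diag_map X m d d' lams zs \<pi> f)
        \<and> Lam = mset (map (\<lambda>\<sigma>. restrict \<sigma> {..<d}) lams))"

definition is_diagonal :: "'a::topological_space set \<Rightarrow> nat \<Rightarrow> nat \<Rightarrow> nat \<Rightarrow> nat
     \<Rightarrow> ('a vmat \<Rightarrow> 'a vmat) \<Rightarrow> bool" where
  "is_diagonal X m d m' d' \<psi> \<longleftrightarrow> (\<exists>Lam. diag_decomp X m d m' d' \<psi> Lam)"

text \<open>Villadsen data: c i, s i j (1 \<le> j \<le> c i), k i, points x i l (1 \<le> l \<le> k i).\<close>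

definition vn :: "(nat \<Rightarrow> nat) \<Rightarrow> (nat \<Rightarrow> nat \<Rightarrow> nat) \<Rightarrow> nat \<Rightarrow> nat" where
  "vn c s i = (\<Sum>j\<in>{1..c i}. s i j)"

definition vd :: "(nat \<Rightarrow> nat) \<Rightarrow> nat \<Rightarrow> nat" where
  "vd c i = (\<Prod>l\<in>{1..<i}. c l)"

definition vm :: "nat \<Rightarrow> (nat \<Rightarrow> nat) \<Rightarrow> (nat \<Rightarrow> nat \<Rightarrow> nat) \<Rightarrow> (nat \<Rightarrow> nat) \<Rightarrow> nat \<Rightarrow> nat" where
  "vm n0 c s k i = n0 * (\<Prod>l\<in>{1..<i}. vn c s l + k l)"

text \<open>X^(d c) = (X^d)^c, the j-th coordinate projection (j = 1..c) takes the j-th block of d coordinates.\<close>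

definition block_proj :: "nat \<Rightarrow> nat \<Rightarrow> (nat \<Rightarrow> 'a) \<Rightarrow> (nat \<Rightarrow> 'a)" where
  "block_proj d t y = (\<lambda>q. if q < d then y (t * d + q) else undefined)"

definition conn_map :: "'a set \<Rightarrow> nat \<Rightarrow> (nat \<Rightarrow> nat) \<Rightarrow> (nat \<Rightarrow> nat \<Rightarrow> nat) \<Rightarrow> (nat \<Rightarrow> nat)
     \<Rightarrow> (nat \<Rightarrow> nat \<Rightarrow> nat \<Rightarrow> 'a) \<Rightarrow> nat \<Rightarrow> 'a vmat \<Rightarrow> 'a vmat" where
  "conn_map X n0 c s k x i =
     diag_map X (vm n0 c s k i) (vd c i) (vd c (Suc i))
       (concat (map (\<lambda>j. replicate (s i j) (\<lambda>q. (j - 1) * vd c i + q)) [1..<Suc (c i)]))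
       (map (x i) [1..<Suc (k i)]) id"

text \<open>conn_maps ... i j = phi_{i,j} = phi_{j-1} o ... o phi_i (identity if j \<le> i).\<close>

primrec conn_maps :: "'a set \<Rightarrow> nat \<Rightarrow> (nat \<Rightarrow> nat) \<Rightarrow> (nat \<Rightarrow> nat \<Rightarrow> nat) \<Rightarrow> (nat \<Rightarrow> nat)
     \<Rightarrow> (nat \<Rightarrow> nat \<Rightarrow> nat \<Rightarrow> 'a) \<Rightarrow> nat \<Rightarrow> nat \<Rightarrow> 'a vmat \<Rightarrow> 'a vmat" where
  "conn_maps X n0 c s k x i 0 = id"
| "conn_maps X n0 c s k x i (Suc j) =
     (if i \<le> j then conn_map X n0 c s k x j \<circ> conn_maps X n0 c s k x i j else id)"

definition villadsen_data :: "'a::metric_space set \<Rightarrow> nat \<Rightarrow> (nat \<Rightarrow> nat) \<Rightarrow> (nat \<Rightarrow> nat \<Rightarrow> nat)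
     \<Rightarrow> (nat \<Rightarrow> nat) \<Rightarrow> (nat \<Rightarrow> nat \<Rightarrow> nat \<Rightarrow> 'a) \<Rightarrow> bool" where
  "villadsen_data X n0 c s k x \<longleftrightarrow>
     compact X \<and> connected X \<and> n0 \<ge> 1
   \<and> (\<forall>i\<ge>1. c i \<ge> 1 \<and> k i \<ge> 1 \<and> (\<forall>j\<in>{1..c i}. s i j \<ge> 1)
         \<and> (\<forall>l\<in>{1..k i}. x i l \<in> Xpow X (vd c i)))
   \<comment> \<open>requirement (a)\<close>
   \<and> (\<forall>i\<ge>1. Xpow X (vd c (Suc i)) \<subseteq>
        closure (\<Union>j\<in>{1..}. \<Union>l\<in>{1..k (i + j)}. \<Union>t\<in>{..< vd c (i + j) div vd c (Suc i)}.
                   {block_proj (vd c (Suc i)) t (x (i + j) l)}))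
   \<comment> \<open>requirement (b)\<close>
   \<and> (\<lambda>i. lim (\<lambda>j. \<Prod>l\<in>{i..i + j}. real (vn c s l) / real (vn c s l + k l))) \<longlonglongrightarrow> 1"

text \<open>Supernatural number prod_{i>=1} f i, as the map prime p |-> total multiplicity in enat.\<close>

definition supernat :: "(nat \<Rightarrow> nat) \<Rightarrow> nat \<Rightarrow> enat" where
  "supernat f p = (SUP N. enat (\<Sum>l\<in>{1..N}. multiplicity p (f l)))"

end

theory Submission
  imports Defs
begin

text \<open>Every map in the statement is diagonal and is described by its list of blocks, each a
  coordinate projection or a point evaluation; composing diagonal maps composes these lists.
  The map psi from level i to level j keeps every coordinate-projection block of phi(i,j) and fills
  the remaining blocks of the new matrix size with point evaluations, first those of phi(i,j),
  then evaluations at an arbitrary point.  The sizes fit because the equality of the supernatural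
  numbers makes m(i) divide m'(j) for large j, and m'(j)/m(j) tends to 1.  Then the composite of
  two consecutive psi's and phi(i,k) share all coordinate-projection blocks and all but a fraction
  1 - (1 - eps)^2 of the blocks: the first step loses a fraction at most eps by the ratio of the
  sizes, the second at most eps by requirement (b).  A tracial state weighs all blocks equally and
  each block of a contraction contributes at most 2/#blocks, so the traces differ by less than
  8 eps.\<close>

section \<open>Diagonal maps given by lists of blocks\<close>

type_synonym 'a label = "(nat \<Rightarrow> nat) + (nat \<Rightarrow> 'a)"

text \<open>\<open>Inl \<sigma>\<close> is the block \<open>f \<circ> cproj d \<sigma>\<close>, \<open>Inr z\<close> the block \<open>f(z)\<close>.\<close>

definition label_point :: "nat \<Rightarrow> (nat \<Rightarrow> 'a) \<Rightarrow> 'a label \<Rightarrow> (nat \<Rightarrow> 'a)" where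
  "label_point d y l = (case l of Inl \<sigma> \<Rightarrow> cproj d \<sigma> y | Inr z \<Rightarrow> z)"

definition label_diag :: "'a set \<Rightarrow> nat \<Rightarrow> nat \<Rightarrow> nat \<Rightarrow> 'a label list \<Rightarrow> 'a vmat \<Rightarrow> 'a vmat" where
  "label_diag X m d d' ls f = (\<lambda>y a b. if y \<in> Xpow X d' \<and> a < m * length ls \<and> b < m * length ls
        \<and> a div m = b div m then f (label_point d y (ls ! (a div m))) (a mod m) (b mod m) else 0)"

definition valid_label :: "'a set \<Rightarrow> nat \<Rightarrow> nat \<Rightarrow> 'a label \<Rightarrow> bool" where
  "valid_label X d d' l = (case l of Inl \<sigma> \<Rightarrow> \<sigma> \<in> {..<d} \<rightarrow> {..<d'} \<and> inj_on \<sigma> {..<d}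
                              | Inr z \<Rightarrow> z \<in> Xpow X d)"

text \<open>The block of a composite coming from block \<open>u\<close> of the outer and block \<open>v\<close> of the inner map,
  where \<open>X\<^sup>d\<close> is the source of the inner map.\<close>

fun compose_label :: "nat \<Rightarrow> 'a label \<Rightarrow> 'a label \<Rightarrow> 'a label" where
  "compose_label d (Inl \<tau>) (Inl \<sigma>) = Inl (restrict (\<tau> \<circ> \<sigma>) {..<d})"
| "compose_label d (Inl \<tau>) (Inr z) = Inr z"
| "compose_label d (Inr w) (Inl \<sigma>) = Inr (cproj d \<sigma> w)"
| "compose_label d (Inr w) (Inr z) = Inr z"

definition compose_labels :: "nat \<Rightarrow> 'a label list \<Rightarrow> 'a label list \<Rightarrow> 'a label list" where
  "compose_labels d ls2 ls1 = concat (map (\<lambda>u. map (compose_label d u) ls1) ls2)"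

definition proj_part :: "nat \<Rightarrow> 'a label list \<Rightarrow> (nat \<Rightarrow> nat) multiset" where
  "proj_part d ls = mset (map (\<lambda>\<sigma>. restrict \<sigma> {..<d}) (map projl (filter isl ls)))"

lemma cproj_in_Xpow: "\<sigma> \<in> {..<d} \<rightarrow> {..<d'} \<Longrightarrow> y \<in> Xpow X d' \<Longrightarrow> cproj d \<sigma> y \<in> Xpow X d"
  unfolding Xpow_def cproj_def by (auto simp: PiE_def Pi_def extensional_def)

lemma cproj_cproj: "\<sigma> \<in> {..<d1} \<rightarrow> {..<d2} \<Longrightarrow>
   cproj d1 \<sigma> (cproj d2 \<tau> y) = cproj d1 (restrict (\<tau> \<circ> \<sigma>) {..<d1}) y"
  unfolding cproj_def by (auto simp: Pi_def fun_eq_iff)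

lemma label_point_in_Xpow: "valid_label X d d' l \<Longrightarrow> y \<in> Xpow X d' \<Longrightarrow> label_point d y l \<in> Xpow X d"
  unfolding valid_label_def label_point_def by (cases l) (auto intro: cproj_in_Xpow)

lemma label_point_compose_label:
  "valid_label X d1 d2 v \<Longrightarrow> label_point d1 (label_point d2 y u) v = label_point d1 y (compose_label d1 u v)"
  unfolding valid_label_def label_point_def by (cases u; cases v) (auto simp: cproj_cproj)

lemma valid_compose_label:
  "valid_label X d2 d3 u \<Longrightarrow> valid_label X d1 d2 v \<Longrightarrow> valid_label X d1 d3 (compose_label d1 u v)"
  unfolding valid_label_def by (cases u; cases v) (auto simp: Pi_def inj_on_def intro!: cproj_in_Xpow)

lemma compose_label_assoc:
  "valid_label X d1 d2 w \<Longrightarrow> compose_label d1 u (compose_label d1 v w) = compose_label d1 (compose_label d2 u v) w"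
  unfolding valid_label_def by (cases u; cases v; cases w) (auto simp: cproj_cproj fun_eq_iff Pi_def)

lemma isl_compose_label [simp]: "isl (compose_label d u v) = (isl u \<and> isl v)"
  by (cases u; cases v) auto

lemma compose_labels_Nil [simp]: "compose_labels d [] b = []"
  unfolding compose_labels_def by simp

lemma compose_labels_Cons: "compose_labels d (u # a) b = map (compose_label d u) b @ compose_labels d a b"
  unfolding compose_labels_def by simp

lemma compose_labels_append: "compose_labels d (a @ a') b = compose_labels d a b @ compose_labels d a' b"
  unfolding compose_labels_def by simp

lemma length_compose_labels [simp]: "length (compose_labels d ls2 ls1) = length ls2 * length ls1"
  unfolding compose_labels_def by (induction ls2) auto

lemma nth_compose_labels:
  "w < length ls2 * length ls1 \<Longrightarrow>
   compose_labels d ls2 ls1 ! w = compose_label d (ls2 ! (w div length ls1)) (ls1 ! (w mod length ls1))"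
proof (induction ls2 arbitrary: w)
  case Nil then show ?case by simp
next
  case (Cons u ls2)
  let ?L = "length ls1"
  show ?case
  proof (cases "w < ?L")
    case True then show ?thesis by (simp add: compose_labels_Cons nth_append)
  next
    case False
    then have w: "w - ?L < length ls2 * ?L" using Cons.prems by auto
    have "?L > 0" using Cons.prems by (cases "?L = 0") auto
    then have "w div ?L = Suc ((w - ?L) div ?L)" "(w - ?L) mod ?L = w mod ?L"
      using False by (simp_all add: le_div_geq le_mod_geq)
    then show ?thesis using Cons.IH[OF w] False by (simp add: compose_labels_Cons nth_append)
  qed
qed

lemma valid_compose_labels:
  "\<forall>l\<in>set ls2. valid_label X d2 d3 l \<Longrightarrow> \<forall>l\<in>set ls1. valid_label X d1 d2 l \<Longrightarrow>
   \<forall>l\<in>set (compose_labels d1 ls2 ls1). valid_label X d1 d3 l"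
  unfolding compose_labels_def by (auto intro: valid_compose_label)

lemma compose_labels_assoc:
  assumes "\<forall>w\<in>set c. valid_label X d1 d2 w"
  shows "compose_labels d1 a (compose_labels d1 b c) = compose_labels d1 (compose_labels d2 a b) c"
proof (induction a)
  case Nil then show ?case by simp
next
  case (Cons u a)
  have "map (compose_label d1 u) (compose_labels d1 b c) = compose_labels d1 (map (compose_label d2 u) b) c"
    by (induction b) (use assms compose_label_assoc[of X d1 d2 _ u] in \<open>simp_all add: compose_labels_Cons\<close>)
  then show ?case using Cons by (simp add: compose_labels_Cons compose_labels_append)
qed

lemma filter_isl_compose_labels:
  "filter isl (compose_labels d a b) = compose_labels d (filter isl a) (filter isl b)"
proof -
  have "filter isl (map (compose_label d u) b) = (if isl u then map (compose_label d u) (filter isl b) else [])" for u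
    by (induction b) auto
  then show ?thesis by (induction a) (auto simp: compose_labels_Cons)
qed

lemma mset_compose_labels:
  "mset (compose_labels d a b) = sum_mset (image_mset (\<lambda>u. image_mset (compose_label d u) (mset b)) (mset a))"
  by (induction a) (auto simp: compose_labels_Cons)

lemma sum_mset_image_mono_fun:
  "(\<And>x. f x \<subseteq># g x) \<Longrightarrow> sum_mset (image_mset f A) \<subseteq># sum_mset (image_mset g A)"
  by (induction A) (auto intro: subset_mset.add_mono)

lemma sum_mset_image_mono_set:
  assumes "A' \<subseteq># A"
  shows "sum_mset (image_mset f A') \<subseteq># sum_mset (image_mset f A)"
proof -
  have "A = A' + (A - A')" using assms by (simp add: subset_mset.add_diff_inverse)
  then have "sum_mset (image_mset f A) = sum_mset (image_mset f A') + sum_mset (image_mset f (A - A'))"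
    by (metis image_mset_union sum_mset.union)
  then show ?thesis by simp
qed

lemma mset_compose_labels_mono:
  assumes "mset a' \<subseteq># mset a" "mset b' \<subseteq># mset b"
  shows "mset (compose_labels d a' b') \<subseteq># mset (compose_labels d a b)"
proof -
  have "sum_mset (image_mset (\<lambda>u. image_mset (compose_label d u) (mset b')) (mset a'))
     \<subseteq># sum_mset (image_mset (\<lambda>u. image_mset (compose_label d u) (mset b)) (mset a'))"
    by (rule sum_mset_image_mono_fun) (use assms(2) in \<open>simp add: image_mset_subseteq_mono\<close>)
  also have "\<dots> \<subseteq># sum_mset (image_mset (\<lambda>u. image_mset (compose_label d u) (mset b)) (mset a))"
    by (rule sum_mset_image_mono_set[OF assms(1)])
  finally show ?thesis by (simp add: mset_compose_labels)
qed

lemma label_diag_apply: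
  "label_diag X m d d' ls f y a b = (if y \<in> Xpow X d' \<and> a < m * length ls \<and> b < m * length ls
        \<and> a div m = b div m then f (label_point d y (ls ! (a div m))) (a mod m) (b mod m) else 0)"
  by (simp add: label_diag_def)

lemma label_diag_compose:
  assumes m2: "m2 = m1 * length ls1" and m1: "m1 > 0"
    and v2: "\<forall>l\<in>set ls2. valid_label X d2 d3 l" and v1: "\<forall>l\<in>set ls1. valid_label X d1 d2 l"
  shows "label_diag X m2 d2 d3 ls2 (label_diag X m1 d1 d2 ls1 f) = label_diag X m1 d1 d3 (compose_labels d1 ls2 ls1) f"
proof (intro ext)
  fix y a b
  let ?L1 = "length ls1" and ?L2 = "length ls2"
  have bnd: "m2 * ?L2 = m1 * (?L2 * ?L1)" using m2 by simp
  show "label_diag X m2 d2 d3 ls2 (label_diag X m1 d1 d2 ls1 f) y a b = label_diag X m1 d1 d3 (compose_labels d1 ls2 ls1) f y a b"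
  proof (cases "y \<in> Xpow X d3 \<and> a < m1 * (?L2 * ?L1) \<and> b < m1 * (?L2 * ?L1)")
    case False
    then show ?thesis unfolding label_diag_apply[of X m2] label_diag_apply[of X m1 d1 d3] length_compose_labels bnd by auto
  next
    case True
    then have y: "y \<in> Xpow X d3" and a: "a < m1 * (?L2 * ?L1)" and b: "b < m1 * (?L2 * ?L1)"
      by auto
    have L1: "?L1 > 0" using a by (cases "?L1 = 0") auto
    have ad: "a div m2 = a div m1 div ?L1" "b div m2 = b div m1 div ?L1"
      unfolding m2 by (simp_all add: div_mult2_eq)
    have am: "(a mod m2) div m1 = a div m1 mod ?L1" "(a mod m2) mod m1 = a mod m1"
             "(b mod m2) div m1 = b div m1 mod ?L1" "(b mod m2) mod m1 = b mod m1"
      unfolding m2 using m1 by (simp_all add: mod_mult2_eq)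
    have lt: "a mod m2 < m1 * ?L1" "b mod m2 < m1 * ?L1" using m2 m1 L1 by simp_all
    have eqv: "(a div m2 = b div m2 \<and> (a mod m2) div m1 = (b mod m2) div m1) = (a div m1 = b div m1)"
      unfolding ad am by (metis div_mult_mod_eq)
    show ?thesis
    proof (cases "a div m1 = b div m1")
      case False
      then show ?thesis unfolding label_diag_apply[of X m2] label_diag_apply[of X m1 d1 d2] label_diag_apply[of X m1 d1 d3]
        using eqv by auto
    next
      case True
      have u: "a div m2 < ?L2" using a m1 L1 unfolding ad
        by (simp add: div_less_iff_less_mult mult.commute mult.left_commute)
      have w: "a div m1 < ?L2 * ?L1" using a m1 by (simp add: div_less_iff_less_mult mult.commute)
      have ev2: "label_point d2 y (ls2 ! (a div m2)) \<in> Xpow X d2"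
        using v2 u y by (auto intro: label_point_in_Xpow)
      have vv: "valid_label X d1 d2 (ls1 ! (a div m1 mod ?L1))" using v1 L1 by auto
      have "label_diag X m2 d2 d3 ls2 (label_diag X m1 d1 d2 ls1 f) y a b
          = label_diag X m1 d1 d2 ls1 f (label_point d2 y (ls2 ! (a div m2))) (a mod m2) (b mod m2)"
        using True eqv y a b bnd by (simp only: label_diag_apply[of X m2]) simp
      also have "\<dots> = f (label_point d1 (label_point d2 y (ls2 ! (a div m2))) (ls1 ! (a div m1 mod ?L1)))
                         (a mod m1) (b mod m1)"
        using ev2 lt True eqv am by (simp add: label_diag_apply[of X m1 d1 d2])
      also have "\<dots> = f (label_point d1 y (compose_labels d1 ls2 ls1 ! (a div m1))) (a mod m1) (b mod m1)"
        using vv w ad by (simp add: label_point_compose_label nth_compose_labels)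
      also have "\<dots> = label_diag X m1 d1 d3 (compose_labels d1 ls2 ls1) f y a b"
        using True y a b by (simp add: label_diag_apply[of X m1 d1 d3])
      finally show ?thesis .
    qed
  qed
qed

lemma permutes_blockwise:
  fixes p :: "nat \<Rightarrow> nat" and m L :: nat
  assumes p: "p permutes {..<L}" and m: "0 < m"
  shows "(\<lambda>a. if a < m * L then p (a div m) * m + a mod m else a) permutes {..<m * L}"
proof -
  define \<pi> where "\<pi> a = (if a < m * L then p (a div m) * m + a mod m else a)" for a
  have \<pi>d: "a < m * L \<Longrightarrow> \<pi> a div m = p (a div m) \<and> \<pi> a mod m = a mod m" for a
    unfolding \<pi>_def using m by simp
  have lt: "\<pi> a < m * L" if a: "a < m * L" for a
  proof -
    have "p (a div m) < L"
      using permutes_in_image[OF p] a m by (simp add: div_less_iff_less_mult mult.commute)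
    then have "(p (a div m) + 1) * m \<le> L * m" by (intro mult_right_mono) simp_all
    then show ?thesis using a mod_less_divisor[OF m, of a] unfolding \<pi>_def by (simp add: algebra_simps)
  qed
  have inj: "inj_on \<pi> {..<m * L}"
  proof (rule inj_onI)
    fix a b assume a: "a \<in> {..<m * L}" and b: "b \<in> {..<m * L}" and e: "\<pi> a = \<pi> b"
    have "p (a div m) = p (b div m)" "a mod m = b mod m" using \<pi>d a b e by (metis lessThan_iff)+
    then have "a div m = b div m" "a mod m = b mod m" using permutes_inj[OF p] by (auto dest: injD)
    then show "a = b" by (metis div_mult_mod_eq)
  qed
  have "\<pi> ` {..<m * L} = {..<m * L}" by (rule endo_inj_surj) (use lt inj in auto)
  then have "bij_betw \<pi> {..<m * L} {..<m * L}" using inj by (simp add: bij_betw_def)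
  then have "\<pi> permutes {..<m * L}" by (rule bij_imp_permutes) (simp add: \<pi>_def)
  then show ?thesis unfolding \<pi>_def[abs_def] .
qed

lemma label_diag_eq_diag_map_permuted:
  fixes p :: "nat \<Rightarrow> nat"
  assumes p: "p permutes {..<length ls}" and m: "0 < m"
    and len: "length lams + length zs = length ls"
    and nth: "\<And>w. w < length ls \<Longrightarrow> ls ! w = (map Inl lams @ map Inr zs) ! p w"
  shows "label_diag X m d d' ls f
       = diag_map X m d d' lams zs (\<lambda>a. if a < m * length ls then p (a div m) * m + a mod m else a) f"
    (is "_ = diag_map X m d d' lams zs ?\<pi> f")
proof (intro ext)
  let ?L = "length ls"
  have \<pi>d: "a < m * ?L \<Longrightarrow> ?\<pi> a div m = p (a div m) \<and> ?\<pi> a mod m = a mod m" for a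
    using m by simp
  have blockwise_div_mod: "(x * m + r mod m) div m = x" "(x * m + r mod m) mod m = r mod m" for x r
    using m by simp_all
  have block: "f (label_point d y (ls ! w)) = (if p w < length lams then f (cproj d (lams ! p w) y)
                   else f (zs ! (p w - length lams)))" if w: "w < ?L" for y w
  proof -
    have "p w < length lams + length zs" using permutes_in_image[OF p] w len by simp
    then show ?thesis using nth[OF w] unfolding label_point_def by (auto simp: nth_append)
  qed
  fix y a b
  show "label_diag X m d d' ls f y a b = diag_map X m d d' lams zs ?\<pi> f y a b"
  proof (cases "y \<in> Xpow X d' \<and> a < m * ?L \<and> b < m * ?L")
    case False then show ?thesis unfolding label_diag_apply diag_map_def len by auto
  next
    case True
    then have a: "a < m * ?L" and b: "b < m * ?L" by auto
    have ab: "(?\<pi> a div m = ?\<pi> b div m) = (a div m = b div m)"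
      using \<pi>d[OF a] \<pi>d[OF b] inj_eq[OF permutes_inj[OF p]] by simp
    show ?thesis
    proof (cases "a div m = b div m")
      case False then show ?thesis using True ab by (simp add: label_diag_apply diag_map_def len)
    next
      case eq: True
      have "a div m < ?L" using a m by (simp add: div_less_iff_less_mult mult.commute)
      then show ?thesis using True eq ab
        by (simp add: label_diag_apply diag_map_def len blockwise_div_mod block)
    qed
  qed
qed

text \<open>Sorting the blocks into coordinate projections followed by point evaluations is undone by a
  blockwise permutation of the rows and columns.\<close>

lemma label_diag_diag_decomp:
  fixes X :: "'a::topological_space set"
  assumes m: "m > 0" and v: "\<forall>l\<in>set ls. valid_label X d d' l" and m': "m' = m * length ls"
  shows "diag_decomp X m d m' d' (label_diag X m d d' ls) (proj_part d ls)"
proof -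
  define lams where "lams = map projl (filter isl ls)"
  define zs where "zs = map projr (filter (\<lambda>l. \<not> isl l) ls)"
  define ys where "ys = map Inl lams @ map Inr zs"
  have "ys = filter isl ls @ filter (\<lambda>l. \<not> isl l) ls"
    unfolding ys_def lams_def zs_def by (induction ls) auto
  then have mys: "mset ls = mset ys" by (simp add: multiset_partition[symmetric])
  then have lys: "length ys = length ls" by (metis size_mset)
  then have lz: "length lams + length zs = length ls" unfolding ys_def by simp
  obtain p where p: "p permutes {..<length ys}" and pl: "permute_list p ys = ls"
    using mset_eq_permutation[OF mys] by blast
  have pL: "p permutes {..<length ls}" using p lys by simp
  have "ls ! w = ys ! p w" if "w < length ls" for w
    using permute_list_nth[OF p, of w] pl lys that by simp
  note diag_map = label_diag_eq_diag_map_permuted[OF pL m lz this[unfolded ys_def]]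
  moreover have "\<sigma> \<in> {..<d} \<rightarrow> {..<d'} \<and> inj_on \<sigma> {..<d}" if \<sigma>: "\<sigma> \<in> set lams" for \<sigma>
  proof -
    obtain l where l: "l \<in> set ls" "isl l" "\<sigma> = projl l" using \<sigma> unfolding lams_def by auto
    then have "l = Inl \<sigma>" by (cases l) auto
    then show ?thesis using v l(1) unfolding valid_label_def by force
  qed
  moreover have "set zs \<subseteq> Xpow X d"
    using v unfolding zs_def valid_label_def by (auto split: sum.splits)
  ultimately show ?thesis
    unfolding diag_decomp_def using permutes_blockwise[OF pL m] lz m'
    by (intro exI[of _ lams] exI[of _ zs]
        exI[of _ "\<lambda>a. if a < m * length ls then p (a div m) * m + a mod m else a"])
       (auto simp: proj_part_def lams_def)
qed

section \<open>The connecting maps\<close>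

definition point_data :: "'a set \<Rightarrow> (nat \<Rightarrow> nat) \<Rightarrow> (nat \<Rightarrow> nat) \<Rightarrow> (nat \<Rightarrow> nat \<Rightarrow> nat \<Rightarrow> 'a) \<Rightarrow> bool" where
  "point_data X c k x \<longleftrightarrow> (\<forall>l\<ge>1. k l \<ge> 1 \<and> (\<forall>q\<in>{1..k l}. x l q \<in> Xpow X (vd c l)))"

definition conn_projs :: "(nat \<Rightarrow> nat) \<Rightarrow> (nat \<Rightarrow> nat \<Rightarrow> nat) \<Rightarrow> nat \<Rightarrow> (nat \<Rightarrow> nat) list" where
  "conn_projs c s i = concat (map (\<lambda>j. replicate (s i j) (\<lambda>q. (j - 1) * vd c i + q)) [1..<Suc (c i)])"

definition conn_labels :: "(nat \<Rightarrow> nat) \<Rightarrow> (nat \<Rightarrow> nat \<Rightarrow> nat) \<Rightarrow> (nat \<Rightarrow> nat)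
     \<Rightarrow> (nat \<Rightarrow> nat \<Rightarrow> nat \<Rightarrow> 'a) \<Rightarrow> nat \<Rightarrow> 'a label list" where
  "conn_labels c s k x i = map Inl (conn_projs c s i) @ map Inr (map (x i) [1..<Suc (k i)])"

text \<open>The blocks of phi(i,j) for \<open>i < j\<close>; the list is empty for \<open>j \<le> i\<close>.\<close>

primrec chain_labels :: "(nat \<Rightarrow> nat) \<Rightarrow> (nat \<Rightarrow> nat \<Rightarrow> nat) \<Rightarrow> (nat \<Rightarrow> nat)
     \<Rightarrow> (nat \<Rightarrow> nat \<Rightarrow> nat \<Rightarrow> 'a) \<Rightarrow> nat \<Rightarrow> nat \<Rightarrow> 'a label list" where
  "chain_labels c s k x i 0 = []"
| "chain_labels c s k x i (Suc j) =
     (if i < j then compose_labels (vd c i) (conn_labels c s k x j) (chain_labels c s k x i j)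
      else if i = j then conn_labels c s k x j else [])"

lemma point_data_k_ge_1: "point_data X c k x \<Longrightarrow> 1 \<le> l \<Longrightarrow> 1 \<le> k l"
  unfolding point_data_def by blast

lemma vd_Suc: "1 \<le> l \<Longrightarrow> vd c (Suc l) = vd c l * c l"
  unfolding vd_def by (simp add: prod.atLeastLessThan_Suc)

lemma vm_split:
  assumes "1 \<le> i" "i \<le> j"
  shows "vm n0 c s k j = vm n0 c s k i * (\<Prod>l\<in>{i..<j}. vn c s l + k l)"
proof -
  have "{1..<j} = {1..<i} \<union> {i..<j}" "{1..<i} \<inter> {i..<j} = {}" using assms by auto
  then show ?thesis unfolding vm_def by (simp add: prod.union_disjoint)
qed

lemma vm_pos:
  assumes "point_data X c k x" "1 \<le> n0"
  shows "0 < vm n0 c s k l"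
proof -
  have "\<forall>j\<in>{1..<l}. 0 < vn c s j + k j" using assms(1) unfolding point_data_def by auto
  then show ?thesis unfolding vm_def using assms(2) by (simp add: prod_pos)
qed

lemma length_conn_projs: "length (conn_projs c s i) = vn c s i"
proof -
  have "length (conn_projs c s i) = sum_list (map (s i) [1..<Suc (c i)])"
    unfolding conn_projs_def by (simp add: length_concat comp_def)
  also have "\<dots> = vn c s i" unfolding vn_def
    by (simp only: sum_set_upt_conv_sum_list_nat[symmetric] set_upt atLeastLessThanSuc_atLeastAtMost)
  finally show ?thesis .
qed

lemma length_conn_labels: "length (conn_labels c s k x i) = vn c s i + k i"
  by (simp add: conn_labels_def length_conn_projs)

lemma filter_isl_conn_labels: "filter isl (conn_labels c s k x i) = map Inl (conn_projs c s i)"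
  by (simp add: conn_labels_def comp_def)

lemma valid_conn_labels:
  assumes xs: "point_data X c k x" and l: "1 \<le> l"
  shows "\<forall>u\<in>set (conn_labels c s k x l). valid_label X (vd c l) (vd c (Suc l)) u"
proof
  fix u assume u: "u \<in> set (conn_labels c s k x l)"
  show "valid_label X (vd c l) (vd c (Suc l)) u"
  proof (cases u)
    case (Inl \<sigma>)
    then obtain j where j: "j \<in> {1..c l}" "\<sigma> = (\<lambda>q. (j - 1) * vd c l + q)"
      using u unfolding conn_labels_def conn_projs_def by fastforce
    have "(j - 1) * vd c l + q < vd c l * c l" if "q < vd c l" for q
    proof -
      have "(j - 1) * vd c l + q < j * vd c l" using that j(1) by (cases j) auto
      also have "\<dots> \<le> c l * vd c l" using j(1) by simp
      finally show ?thesis by (simp add: mult.commute)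
    qed
    then show ?thesis using Inl j vd_Suc[OF l] unfolding valid_label_def by (auto simp: inj_on_def)
  next
    case (Inr z)
    then show ?thesis using u xs l unfolding conn_labels_def valid_label_def point_data_def by auto
  qed
qed

lemma diag_map_id_eq_label_diag: "diag_map X m d d' L Z id = label_diag X m d d' (map Inl L @ map Inr Z)"
proof (intro ext)
  fix f y a b
  show "diag_map X m d d' L Z id f y a b = label_diag X m d d' (map Inl L @ map Inr Z) f y a b"
  proof (cases "y \<in> Xpow X d' \<and> a < m * (length L + length Z) \<and> b < m * (length L + length Z) \<and> a div m = b div m")
    case True
    then have "a div m < length L + length Z"
      by (metis div_less_iff_less_mult mult.commute mult_0 not_less0 neq0_conv)
    then have "label_point d y ((map Inl L @ map Inr Z) ! (a div m))
             = (if a div m < length L then cproj d (L ! (a div m)) y else Z ! (a div m - length L))"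
      by (auto simp: nth_append label_point_def)
    then show ?thesis unfolding diag_map_def label_diag_apply using True by simp
  next
    case False then show ?thesis unfolding diag_map_def label_diag_apply by auto
  qed
qed

lemma conn_map_eq_label_diag:
  "conn_map X n0 c s k x i = label_diag X (vm n0 c s k i) (vd c i) (vd c (Suc i)) (conn_labels c s k x i)"
  unfolding conn_map_def conn_labels_def conn_projs_def diag_map_id_eq_label_diag ..

lemma length_chain_labels:
  "i < j \<Longrightarrow> length (chain_labels c s k x i j) = (\<Prod>l\<in>{i..<j}. vn c s l + k l)"
  by (induction j) (auto simp: length_conn_labels prod.atLeastLessThan_Suc less_Suc_eq)

lemma filter_isl_chain_labels_indep:
  "filter isl (chain_labels c s k x i j) = filter isl (chain_labels c s k' x' i j)"
  by (induction j) (simp_all add: filter_isl_compose_labels filter_isl_conn_labels)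

lemma length_filter_isl_chain_labels:
  "i < j \<Longrightarrow> length (filter isl (chain_labels c s k x i j)) = (\<Prod>l\<in>{i..<j}. vn c s l)"
  by (induction j) (auto simp: filter_isl_compose_labels filter_isl_conn_labels length_conn_projs
                               prod.atLeastLessThan_Suc less_Suc_eq)

lemma valid_chain_labels:
  assumes "point_data X c k x" "1 \<le> i" "i < j"
  shows "\<forall>u\<in>set (chain_labels c s k x i j). valid_label X (vd c i) (vd c j) u"
  using \<open>i < j\<close>
proof (induction j)
  case (Suc j)
  have conn: "\<forall>u\<in>set (conn_labels c s k x j). valid_label X (vd c j) (vd c (Suc j)) u"
    using valid_conn_labels[OF assms(1)] Suc.prems assms(2) by simp
  show ?case
  proof (cases "i < j")
    case True
    then show ?thesis using valid_compose_labels[OF conn Suc.IH[OF True]] by simp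
  next
    case False
    then have "i = j" using Suc.prems by simp
    then show ?thesis using conn by simp
  qed
qed simp

lemma vm_mult_length_chain_labels:
  "1 \<le> i \<Longrightarrow> i < j \<Longrightarrow> vm n0 c s k i * length (chain_labels c s k x i j) = vm n0 c s k j"
  using vm_split[of i j n0 c s k] by (simp add: length_chain_labels)

lemma conn_maps_self: "conn_maps X n0 c s k x i i = id"
  by (cases i) auto

lemma conn_maps_eq_label_diag:
  assumes xs: "point_data X c k x" and n0: "1 \<le> n0" and i: "1 \<le> i" and ij: "i < j"
  shows "conn_maps X n0 c s k x i j = label_diag X (vm n0 c s k i) (vd c i) (vd c j) (chain_labels c s k x i j)"
  using ij
proof (induction j)
  case (Suc j)
  show ?case
  proof (cases "i < j")
    case True
    have m: "vm n0 c s k j = vm n0 c s k i * length (chain_labels c s k x i j)"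
      by (rule sym[OF vm_mult_length_chain_labels[OF i True]])
    show ?thesis
    proof
      fix f
      have "conn_maps X n0 c s k x i (Suc j) f
          = label_diag X (vm n0 c s k j) (vd c j) (vd c (Suc j)) (conn_labels c s k x j)
              (label_diag X (vm n0 c s k i) (vd c i) (vd c j) (chain_labels c s k x i j) f)"
        using True Suc.IH by (simp add: conn_map_eq_label_diag)
      also have "\<dots> = label_diag X (vm n0 c s k i) (vd c i) (vd c (Suc j)) (chain_labels c s k x i (Suc j)) f"
        using label_diag_compose[OF m vm_pos[OF xs n0] valid_conn_labels[OF xs] valid_chain_labels[OF xs i True]]
          True i by simp
      finally show "conn_maps X n0 c s k x i (Suc j) f
          = label_diag X (vm n0 c s k i) (vd c i) (vd c (Suc j)) (chain_labels c s k x i (Suc j)) f" .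
    qed
  next
    case False
    then have "j = i" using Suc.prems by simp
    then show ?thesis by (simp add: conn_maps_self conn_map_eq_label_diag)
  qed
qed simp

lemma chain_labels_split:
  assumes xs: "point_data X c k x" and i: "1 \<le> i" and ij: "i < j" and jk: "j < k'"
  shows "chain_labels c s k x i k' = compose_labels (vd c i) (chain_labels c s k x j k') (chain_labels c s k x i j)"
  using jk
proof (induction k')
  case (Suc n)
  have valid: "\<forall>u\<in>set (chain_labels c s k x i j). valid_label X (vd c i) (vd c j) u"
    by (rule valid_chain_labels[OF xs i ij])
  show ?case
  proof (cases "j < n")
    case True
    then show ?thesis using Suc ij by (simp add: compose_labels_assoc[OF valid])
  next
    case False
    then have "j = n" using Suc.prems by simp
    then show ?thesis using ij by simp
  qed
qed simp
section \<open>Tracial states and diagonal maps\<close>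

lemma continuous_on_cproj: "continuous_on S (\<lambda>y. cproj d \<sigma> y)"
  unfolding cproj_def
proof (intro continuous_on_coordinatewise_then_product)
  fix i
  show "continuous_on S (\<lambda>y. if i < d then y (\<sigma> i) else undefined)"
    by (cases "i < d") (auto intro: continuous_on_subset[OF continuous_on_product_coordinates])
qed

lemma continuous_on_label_point:
  fixes X :: "'a::topological_space set"
  assumes v: "valid_label X d0 d l" and h: "h \<in> MC X m d0"
  shows "continuous_on (Xpow X d) (\<lambda>y. h (label_point d0 y l) p q)"
proof (cases l)
  case (Inl \<sigma>)
  have hc: "continuous_on (Xpow X d0) (\<lambda>z. h z p q)" using h unfolding MC_def by blast
  have "continuous_on (Xpow X d) (\<lambda>y. h (cproj d0 \<sigma> y) p q)"
    by (rule continuous_on_compose2[OF hc continuous_on_cproj]) (use v Inl in \<open>auto simp: valid_label_def intro: cproj_in_Xpow\<close>)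
  then show ?thesis using Inl by (simp add: label_point_def)
next
  case (Inr z) then show ?thesis by (simp add: label_point_def)
qed

lemma label_diag_in_MC:
  fixes X :: "'a::topological_space set"
  assumes h: "h \<in> MC X m d0" and v: "\<forall>l\<in>set ls. valid_label X d0 d l" and m: "m > 0"
  shows "label_diag X m d0 d ls h \<in> MC X (m * length ls) d"
proof -
  have "continuous_on (Xpow X d) (\<lambda>y. label_diag X m d0 d ls h y a b)" for a b
  proof (cases "a < m * length ls \<and> b < m * length ls \<and> a div m = b div m")
    case True
    then have w: "a div m < length ls" using m
      by (simp add: div_less_iff_less_mult mult.commute)
    have "continuous_on (Xpow X d) (\<lambda>y. h (label_point d0 y (ls ! (a div m))) (a mod m) (b mod m))"
      using v w h by (intro continuous_on_label_point) auto
    then show ?thesis by (rule continuous_on_eq) (use True in \<open>auto simp: label_diag_apply\<close>)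
  next
    case False
    show ?thesis by (rule continuous_on_eq[of _ "\<lambda>_. 0"]) (use False in \<open>auto simp: label_diag_apply\<close>)
  qed
  then show ?thesis unfolding MC_def by (auto simp: label_diag_apply fun_eq_iff)
qed

lemma mc_one_in_MC: "mc_one X m d \<in> MC X m d"
proof -
  have "continuous_on (Xpow X d) (\<lambda>y. mc_one X m d y a b)" for a b
    by (rule continuous_on_eq[of _ "\<lambda>_. if a = b \<and> a < m then 1 else 0"]) (auto simp: mc_one_def)
  then show ?thesis unfolding MC_def by (auto simp: mc_one_def)
qed

lemma sum_lessThan_mult_blocks: "(\<Sum>a<(m::nat) * (B::nat). F a) = (\<Sum>w<B. \<Sum>p<m. F (w * m + p))"
proof (induction B)
  case 0 then show ?case by simp
next
  case (Suc B)
  have "(\<Sum>a<m * Suc B. F a) = (\<Sum>a\<in>{0..<m * B}. F a) + (\<Sum>a\<in>{m * B..<m * B + m}. F a)"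
    by (subst sum.atLeastLessThan_concat) (auto simp: lessThan_atLeast0 algebra_simps)
  also have "(\<Sum>a\<in>{m * B..<m * B + m}. F a) = (\<Sum>p<m. F (B * m + p))"
    using sum.shift_bounds_nat_ivl[of F 0 "m * B" m] by (simp add: lessThan_atLeast0 algebra_simps)
  finally show ?case using Suc by (simp add: lessThan_atLeast0)
qed

lemma norm_sum_mset_image_le:
  fixes f :: "'a \<Rightarrow> 'b::real_normed_vector"
  shows "(\<And>x. x \<in># A \<Longrightarrow> norm (f x) \<le> c) \<Longrightarrow> norm (sum_mset (image_mset f A)) \<le> real (size A) * c"
proof (induction A rule: multiset_induct)
  case empty then show ?case by simp
next
  case (add x A)
  have "norm (sum_mset (image_mset f (add_mset x A))) \<le> norm (f x) + norm (sum_mset (image_mset f A))"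
    by (simp add: norm_triangle_ineq)
  also have "\<dots> \<le> c + real (size A) * c" using add by (intro add_mono) auto
  finally show ?case by (simp add: algebra_simps)
qed

definition mat_unit :: "'a set \<Rightarrow> nat \<Rightarrow> nat \<Rightarrow> nat \<Rightarrow> ((nat \<Rightarrow> 'a) \<Rightarrow> complex) \<Rightarrow> 'a vmat" where
  "mat_unit X d a b g = (\<lambda>y i j. if y \<in> Xpow X d \<and> i = a \<and> j = b then g y else 0)"

definition mc_zero :: "'a vmat" where "mc_zero = (\<lambda>_ _ _. 0)"

lemma mat_unit_cong: "(\<And>y. y \<in> Xpow X d \<Longrightarrow> g y = h y) \<Longrightarrow> mat_unit X d a b g = mat_unit X d a b h"
  unfolding mat_unit_def by (auto simp: fun_eq_iff)

lemma mc_zero_in_MC: "mc_zero \<in> MC X m d"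
  unfolding MC_def mc_zero_def by auto

lemma sum_in_MC: "finite K \<Longrightarrow> (\<And>k. k \<in> K \<Longrightarrow> F k \<in> MC X m d) \<Longrightarrow> (\<lambda>y i j. \<Sum>k\<in>K. F k y i j) \<in> MC X m d"
  unfolding MC_def by (auto intro!: continuous_on_sum)

lemma mat_unit_in_MC:
  assumes "a < m" "b < m" "continuous_on (Xpow X d) g"
  shows "mat_unit X d a b g \<in> MC X m d"
proof -
  have "continuous_on (Xpow X d) (\<lambda>y. mat_unit X d a b g y i j)" for i j
  proof (cases "i = a \<and> j = b")
    case True
    have "continuous_on (Xpow X d) (\<lambda>y. if y \<in> Xpow X d then g y else 0)"
      by (rule continuous_on_eq[OF assms(3)]) auto
    then show ?thesis using True unfolding mat_unit_def by simp
  next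
    case False then show ?thesis unfolding mat_unit_def by (simp add: False)
  qed
  then show ?thesis using assms unfolding MC_def mat_unit_def by auto
qed

lemma mc_mult_mat_unit:
  assumes "b < m"
  shows "mc_mult m (mat_unit X d a b g) (mat_unit X d b' c h) =
          (if b = b' then mat_unit X d a c (\<lambda>y. g y * h y) else mc_zero)"
proof (intro ext)
  fix y i j
  have "(\<Sum>q<m. mat_unit X d a b g y i q * mat_unit X d b' c h y q j)
      = (\<Sum>q<m. if q = b then (if y \<in> Xpow X d \<and> i = a \<and> b = b' \<and> j = c then g y * h y else 0) else 0)"
    by (rule sum.cong) (auto simp: mat_unit_def)
  also have "\<dots> = (if y \<in> Xpow X d \<and> i = a \<and> b = b' \<and> j = c then g y * h y else 0)"
    using assms by simp
  finally show "mc_mult m (mat_unit X d a b g) (mat_unit X d b' c h) y i j =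
     (if b = b' then mat_unit X d a c (\<lambda>y. g y * h y) else mc_zero) y i j"
    unfolding mc_mult_def by (auto simp: mat_unit_def mc_zero_def)
qed

lemma mc_adj_mat_unit: "mc_adj (mat_unit X d a b g) = mat_unit X d b a (\<lambda>y. cnj (g y))"
  unfolding mc_adj_def mat_unit_def by (auto simp: fun_eq_iff)

definition corner_trace :: "'a set \<Rightarrow> nat \<Rightarrow> ('a vmat \<Rightarrow> complex) \<Rightarrow> ((nat \<Rightarrow> 'a) \<Rightarrow> complex) \<Rightarrow> complex" where
  "corner_trace X d \<tau> g = \<tau> (mat_unit X d 0 0 g)"

definition label_trace :: "'a set \<Rightarrow> nat \<Rightarrow> ('a vmat \<Rightarrow> complex) \<Rightarrow> nat \<Rightarrow> nat \<Rightarrow> 'a vmat \<Rightarrow> 'a label \<Rightarrow> complex" where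
  "label_trace X d \<tau> m d0 h l = (\<Sum>p<m. corner_trace X d \<tau> (\<lambda>y. h (label_point d0 y l) p p))"

lemma MC_eq_sum_mat_unit:
  assumes x: "x \<in> MC X M d"
  shows "x = (\<lambda>y i j. \<Sum>ab\<in>{..<M}\<times>{..<M}. mat_unit X d (fst ab) (snd ab) (\<lambda>y. x y (fst ab) (snd ab)) y i j)"
proof (intro ext)
  fix y i j
  show "x y i j = (\<Sum>ab\<in>{..<M}\<times>{..<M}. mat_unit X d (fst ab) (snd ab) (\<lambda>y. x y (fst ab) (snd ab)) y i j)"
  proof (cases "y \<in> Xpow X d \<and> i < M \<and> j < M")
    case True
    have "(\<Sum>ab\<in>{..<M}\<times>{..<M}. mat_unit X d (fst ab) (snd ab) (\<lambda>y. x y (fst ab) (snd ab)) y i j)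
        = (\<Sum>ab\<in>{..<M}\<times>{..<M}. if ab = (i, j) then x y i j else 0)"
      by (rule sum.cong) (auto simp: mat_unit_def True)
    also have "\<dots> = x y i j" using True by simp
    finally show ?thesis by simp
  next
    case False
    then have "x y i j = 0" using x unfolding MC_def by auto
    moreover have "mat_unit X d (fst ab) (snd ab) (\<lambda>y. x y (fst ab) (snd ab)) y i j = 0"
      if "ab \<in> {..<M}\<times>{..<M}" for ab
      using False that x unfolding mat_unit_def MC_def by auto
    ultimately show ?thesis by simp
  qed
qed

context
  fixes X :: "'a::topological_space set" and M d :: nat and \<tau> :: "'a vmat \<Rightarrow> complex"
  assumes tau: "tracial_state X M d \<tau>"
begin

lemma tracial_add: "f \<in> MC X M d \<Longrightarrow> g \<in> MC X M d \<Longrightarrow> \<tau> (mc_add f g) = \<tau> f + \<tau> g"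
  using tau unfolding tracial_state_def by blast

lemma tracial_scale: "f \<in> MC X M d \<Longrightarrow> \<tau> (mc_scale c f) = c * \<tau> f"
  using tau unfolding tracial_state_def by blast

lemma tracial_comm: "f \<in> MC X M d \<Longrightarrow> g \<in> MC X M d \<Longrightarrow> \<tau> (mc_mult M f g) = \<tau> (mc_mult M g f)"
  using tau unfolding tracial_state_def by blast

lemma tracial_pos: "b \<in> MC X M d \<Longrightarrow> Im (\<tau> (mc_mult M (mc_adj b) b)) = 0 \<and> Re (\<tau> (mc_mult M (mc_adj b) b)) \<ge> 0"
  using tau unfolding tracial_state_def by blast

lemma tracial_one: "\<tau> (mc_one X M d) = 1"
  using tau unfolding tracial_state_def by blast

lemma tracial_zero: "\<tau> mc_zero = 0"
proof -
  have e: "mc_scale 0 mc_zero = mc_zero" unfolding mc_scale_def mc_zero_def by simp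
  have "\<tau> mc_zero = \<tau> (mc_scale 0 mc_zero)" by (simp only: e)
  also have "\<dots> = 0" by (simp add: tracial_scale[OF mc_zero_in_MC])
  finally show ?thesis .
qed

lemma tracial_dim_pos: "0 < M"
proof (rule ccontr)
  assume "\<not> 0 < M"
  then have "mc_one X M d = mc_zero" by (auto simp: mc_one_def mc_zero_def fun_eq_iff)
  then show False using tracial_one tracial_zero by simp
qed

lemma tracial_sum: "finite K \<Longrightarrow> (\<And>k. k \<in> K \<Longrightarrow> F k \<in> MC X M d) \<Longrightarrow>
    \<tau> (\<lambda>y i j. \<Sum>k\<in>K. F k y i j) = (\<Sum>k\<in>K. \<tau> (F k))"
proof (induction K rule: finite_induct)
  case empty
  then show ?case using tracial_zero by (simp add: mc_zero_def)
next
  case (insert k K)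
  have "(\<lambda>y i j. \<Sum>k\<in>insert k K. F k y i j) = mc_add (F k) (\<lambda>y i j. \<Sum>k\<in>K. F k y i j)"
    using insert by (simp add: mc_add_def)
  then show ?case using insert tracial_add[of "F k"] sum_in_MC[of K F X M d] by simp
qed

lemma tracial_offdiag_unit:
  assumes "a < M" "b < M" "a \<noteq> b" "continuous_on (Xpow X d) g"
  shows "\<tau> (mat_unit X d a b g) = 0"
proof -
  have c1: "continuous_on (Xpow X d) (\<lambda>_. 1::complex)" by simp
  have u1: "mat_unit X d a a (\<lambda>_. 1) \<in> MC X M d" using assms c1 by (intro mat_unit_in_MC) auto
  have u2: "mat_unit X d a b g \<in> MC X M d" using assms by (intro mat_unit_in_MC) auto
  have "mat_unit X d a b g = mc_mult M (mat_unit X d a a (\<lambda>_. 1)) (mat_unit X d a b g)"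
    using assms by (simp add: mc_mult_mat_unit)
  then have "\<tau> (mat_unit X d a b g) = \<tau> (mc_mult M (mat_unit X d a b g) (mat_unit X d a a (\<lambda>_. 1)))"
    using tracial_comm[OF u1 u2] by simp
  also have "\<dots> = 0" using assms by (simp add: mc_mult_mat_unit tracial_zero)
  finally show ?thesis .
qed

lemma tracial_diag_unit_eq:
  assumes "a < M" "b < M" "continuous_on (Xpow X d) g"
  shows "\<tau> (mat_unit X d a a g) = \<tau> (mat_unit X d b b g)"
proof -
  have c1: "continuous_on (Xpow X d) (\<lambda>_. 1::complex)" by simp
  have u1: "mat_unit X d b a (\<lambda>_. 1) \<in> MC X M d" using assms c1 by (intro mat_unit_in_MC) auto
  have u2: "mat_unit X d a b g \<in> MC X M d" using assms by (intro mat_unit_in_MC) auto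
  have "mat_unit X d a a g = mc_mult M (mat_unit X d a b g) (mat_unit X d b a (\<lambda>_. 1))"
    using assms by (simp add: mc_mult_mat_unit)
  moreover have "mat_unit X d b b g = mc_mult M (mat_unit X d b a (\<lambda>_. 1)) (mat_unit X d a b g)"
    using assms by (simp add: mc_mult_mat_unit)
  ultimately show ?thesis using tracial_comm[OF u2 u1] by simp
qed

lemma corner_trace_cong: "(\<And>y. y \<in> Xpow X d \<Longrightarrow> g y = h y) \<Longrightarrow> corner_trace X d \<tau> g = corner_trace X d \<tau> h"
  unfolding corner_trace_def by (simp add: mat_unit_cong[of X d g h])

lemma tracial_eq_sum_corner_trace:
  assumes x: "x \<in> MC X M d"
  shows "\<tau> x = (\<Sum>a<M. corner_trace X d \<tau> (\<lambda>y. x y a a))"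
proof -
  have cx: "continuous_on (Xpow X d) (\<lambda>y. x y a b)" for a b using x unfolding MC_def by blast
  have "\<tau> x = (\<Sum>ab\<in>{..<M}\<times>{..<M}. \<tau> (mat_unit X d (fst ab) (snd ab) (\<lambda>y. x y (fst ab) (snd ab))))"
    by (subst MC_eq_sum_mat_unit[OF x], rule tracial_sum) (auto intro!: mat_unit_in_MC cx)
  also have "\<dots> = (\<Sum>a<M. \<Sum>b<M. \<tau> (mat_unit X d a b (\<lambda>y. x y a b)))"
    using sum.cartesian_product[of "\<lambda>a b. \<tau> (mat_unit X d a b (\<lambda>y. x y a b))" "{..<M}" "{..<M}"]
    by (simp add: split_beta)
  also have "\<dots> = (\<Sum>a<M. \<tau> (mat_unit X d a a (\<lambda>y. x y a a)))"
  proof (rule sum.cong[OF refl])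
    fix a assume a: "a \<in> {..<M}"
    have "(\<Sum>b<M. \<tau> (mat_unit X d a b (\<lambda>y. x y a b))) = (\<Sum>b<M. if b = a then \<tau> (mat_unit X d a a (\<lambda>y. x y a a)) else 0)"
      by (rule sum.cong) (use a in \<open>auto intro: tracial_offdiag_unit cx\<close>)
    also have "\<dots> = \<tau> (mat_unit X d a a (\<lambda>y. x y a a))" using a by simp
    finally show "(\<Sum>b<M. \<tau> (mat_unit X d a b (\<lambda>y. x y a b))) = \<tau> (mat_unit X d a a (\<lambda>y. x y a a))" .
  qed
  also have "\<dots> = (\<Sum>a<M. corner_trace X d \<tau> (\<lambda>y. x y a a))"
    unfolding corner_trace_def by (rule sum.cong[OF refl]) (use tracial_dim_pos in \<open>auto intro: tracial_diag_unit_eq cx\<close>)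
  finally show ?thesis .
qed

lemma corner_trace_add: "continuous_on (Xpow X d) f \<Longrightarrow> continuous_on (Xpow X d) g \<Longrightarrow>
   corner_trace X d \<tau> (\<lambda>y. f y + g y) = corner_trace X d \<tau> f + corner_trace X d \<tau> g"
proof -
  assume f: "continuous_on (Xpow X d) f" and g: "continuous_on (Xpow X d) g"
  have "mat_unit X d 0 0 (\<lambda>y. f y + g y) = mc_add (mat_unit X d 0 0 f) (mat_unit X d 0 0 g)"
    unfolding mat_unit_def mc_add_def by (auto simp: fun_eq_iff)
  then show ?thesis using tracial_add mat_unit_in_MC[of 0 M 0 X d f] mat_unit_in_MC[of 0 M 0 X d g] tracial_dim_pos f g
    by (simp add: corner_trace_def)
qed

lemma corner_trace_scale: "continuous_on (Xpow X d) f \<Longrightarrow> corner_trace X d \<tau> (\<lambda>y. c * f y) = c * corner_trace X d \<tau> f"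
proof -
  assume f: "continuous_on (Xpow X d) f"
  have "mat_unit X d 0 0 (\<lambda>y. c * f y) = mc_scale c (mat_unit X d 0 0 f)"
    unfolding mat_unit_def mc_scale_def by (auto simp: fun_eq_iff)
  then show ?thesis using tracial_scale mat_unit_in_MC[of 0 M 0 X d f] tracial_dim_pos f
    by (simp add: corner_trace_def)
qed

lemma corner_trace_const_one: "corner_trace X d \<tau> (\<lambda>_. 1) = 1 / of_nat M"
proof -
  have "1 = \<tau> (mc_one X M d)" using tracial_one by simp
  also have "\<dots> = (\<Sum>a<M. corner_trace X d \<tau> (\<lambda>y. mc_one X M d y a a))"
    by (rule tracial_eq_sum_corner_trace[OF mc_one_in_MC])
  also have "\<dots> = (\<Sum>a<M. corner_trace X d \<tau> (\<lambda>_. 1))"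
    by (rule sum.cong[OF refl], rule corner_trace_cong) (auto simp: mc_one_def)
  finally have "1 = of_nat M * corner_trace X d \<tau> (\<lambda>_. 1)" by simp
  then show ?thesis using tracial_dim_pos by (simp add: field_simps)
qed

text \<open>\<open>1 - e g\<close> is \<open>b\<^sup>* b\<close> for the corner matrix unit \<open>b\<close> with entry \<open>sqrt (1 - e g)\<close>, so positivity of \<open>\<tau>\<close>
  applies.\<close>

lemma corner_trace_one_minus_nonneg:
  fixes gr :: "(nat \<Rightarrow> 'a) \<Rightarrow> real"
  assumes c: "continuous_on (Xpow X d) gr" and b: "\<And>y. y \<in> Xpow X d \<Longrightarrow> e * gr y \<le> 1"
  shows "Im (corner_trace X d \<tau> (\<lambda>_. 1) - of_real e * corner_trace X d \<tau> (\<lambda>y. of_real (gr y))) = 0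
       \<and> Re (corner_trace X d \<tau> (\<lambda>_. 1) - of_real e * corner_trace X d \<tau> (\<lambda>y. of_real (gr y))) \<ge> 0"
proof -
  define bb where "bb = mat_unit X d 0 0 (\<lambda>y. complex_of_real (sqrt (1 - e * gr y)))"
  have cb: "continuous_on (Xpow X d) (\<lambda>y. complex_of_real (sqrt (1 - e * gr y)))"
    using c by (intro continuous_intros)
  have bMC: "bb \<in> MC X M d" unfolding bb_def using tracial_dim_pos cb by (intro mat_unit_in_MC) auto
  have cg: "continuous_on (Xpow X d) (\<lambda>y. complex_of_real (gr y))" using c by (intro continuous_intros)
  have "mc_mult M (mc_adj bb) bb = mat_unit X d 0 0 (\<lambda>y. cnj (complex_of_real (sqrt (1 - e * gr y))) * complex_of_real (sqrt (1 - e * gr y)))"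
    unfolding bb_def mc_adj_mat_unit using tracial_dim_pos by (simp add: mc_mult_mat_unit)
  also have "\<dots> = mat_unit X d 0 0 (\<lambda>y. 1 + (- of_real e) * complex_of_real (gr y))"
  proof (rule mat_unit_cong)
    fix y assume "y \<in> Xpow X d"
    then have "1 - e * gr y \<ge> 0" using b by simp
    then show "cnj (complex_of_real (sqrt (1 - e * gr y))) * complex_of_real (sqrt (1 - e * gr y))
         = 1 + (- of_real e) * complex_of_real (gr y)"
      by (simp flip: of_real_mult)
  qed
  finally have eq: "mc_mult M (mc_adj bb) bb = mat_unit X d 0 0 (\<lambda>y. 1 + (- of_real e) * complex_of_real (gr y))" .
  have "\<tau> (mc_mult M (mc_adj bb) bb) = corner_trace X d \<tau> (\<lambda>y. 1 + (- of_real e) * complex_of_real (gr y))"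
    unfolding eq corner_trace_def by (rule refl)
  also have "\<dots> = corner_trace X d \<tau> (\<lambda>_. 1) + corner_trace X d \<tau> (\<lambda>y. (- of_real e) * complex_of_real (gr y))"
    by (rule corner_trace_add) (simp, rule continuous_on_mult_left[OF cg])
  also have "corner_trace X d \<tau> (\<lambda>y. (- of_real e) * complex_of_real (gr y)) = (- of_real e) * corner_trace X d \<tau> (\<lambda>y. of_real (gr y))"
    by (rule corner_trace_scale[OF cg])
  finally have "\<tau> (mc_mult M (mc_adj bb) bb) = corner_trace X d \<tau> (\<lambda>_. 1) - of_real e * corner_trace X d \<tau> (\<lambda>y. of_real (gr y))"
    by simp
  then show ?thesis using tracial_pos[OF bMC] by simp
qed

lemma corner_trace_real_bound:
  fixes gr :: "(nat \<Rightarrow> 'a) \<Rightarrow> real"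
  assumes c: "continuous_on (Xpow X d) gr" and b: "\<And>y. y \<in> Xpow X d \<Longrightarrow> \<bar>gr y\<bar> \<le> 1"
  shows "cmod (corner_trace X d \<tau> (\<lambda>y. of_real (gr y))) \<le> 1 / real M"
proof -
  have p1: "\<And>y. y \<in> Xpow X d \<Longrightarrow> 1 * gr y \<le> 1" and p2: "\<And>y. y \<in> Xpow X d \<Longrightarrow> (-1) * gr y \<le> 1"
    using b by (auto simp: abs_le_iff)
  note A = corner_trace_one_minus_nonneg[OF c p1] and B = corner_trace_one_minus_nonneg[OF c p2]
  let ?t = "corner_trace X d \<tau> (\<lambda>y. of_real (gr y))"
  have one: "corner_trace X d \<tau> (\<lambda>_. 1) = of_real (1 / real M)" using corner_trace_const_one by simp
  have "Im ?t = 0" using A one by simp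
  moreover have "\<bar>Re ?t\<bar> \<le> 1 / real M" using A B one by auto
  ultimately show ?thesis by (simp add: cmod_def)
qed

lemma corner_trace_bound:
  assumes c: "continuous_on (Xpow X d) g" and b: "\<And>y. y \<in> Xpow X d \<Longrightarrow> cmod (g y) \<le> 1"
  shows "cmod (corner_trace X d \<tau> g) \<le> 2 / real M"
proof -
  have cr: "continuous_on (Xpow X d) (\<lambda>y. Re (g y))" and ci: "continuous_on (Xpow X d) (\<lambda>y. Im (g y))"
    using c by (auto intro: continuous_intros)
  have cr': "continuous_on (Xpow X d) (\<lambda>y. complex_of_real (Re (g y)))"
    and ci': "continuous_on (Xpow X d) (\<lambda>y. complex_of_real (Im (g y)))"
    using cr ci by (auto intro: continuous_intros)
  have geq: "g = (\<lambda>y. complex_of_real (Re (g y)) + \<i> * complex_of_real (Im (g y)))"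
    by (simp add: fun_eq_iff complex_eq_iff)
  have "corner_trace X d \<tau> g = corner_trace X d \<tau> (\<lambda>y. complex_of_real (Re (g y))) + \<i> * corner_trace X d \<tau> (\<lambda>y. complex_of_real (Im (g y)))"
  proof -
    have "corner_trace X d \<tau> (\<lambda>y. complex_of_real (Re (g y)) + \<i> * complex_of_real (Im (g y)))
       = corner_trace X d \<tau> (\<lambda>y. complex_of_real (Re (g y))) + corner_trace X d \<tau> (\<lambda>y. \<i> * complex_of_real (Im (g y)))"
      by (rule corner_trace_add[OF cr']) (intro continuous_on_mult_left ci')
    also have "corner_trace X d \<tau> (\<lambda>y. \<i> * complex_of_real (Im (g y))) = \<i> * corner_trace X d \<tau> (\<lambda>y. complex_of_real (Im (g y)))"
      by (rule corner_trace_scale[OF ci'])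
    finally show ?thesis using arg_cong[OF geq, of "corner_trace X d \<tau>"] by simp
  qed
  also have "cmod \<dots> \<le> 1 / real M + 1 / real M"
  proof (rule order_trans[OF norm_triangle_ineq], rule add_mono)
    show "cmod (corner_trace X d \<tau> (\<lambda>y. complex_of_real (Re (g y)))) \<le> 1 / real M"
      using b by (intro corner_trace_real_bound[OF cr]) (meson abs_Re_le_cmod order_trans)
    show "cmod (\<i> * corner_trace X d \<tau> (\<lambda>y. complex_of_real (Im (g y)))) \<le> 1 / real M"
      using b by (simp add: norm_mult, intro corner_trace_real_bound[OF ci]) (meson abs_Im_le_cmod order_trans)
  qed
  finally show ?thesis by simp
qed

lemma tracial_label_diag:
  assumes MB: "M = m * length ls" and m: "m > 0" and h: "h \<in> MC X m d0"
    and v: "\<forall>l\<in>set ls. valid_label X d0 d l"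
  shows "\<tau> (label_diag X m d0 d ls h) = sum_list (map (label_trace X d \<tau> m d0 h) ls)"
proof -
  let ?L = "length ls"
  have "\<tau> (label_diag X m d0 d ls h) = (\<Sum>a<M. corner_trace X d \<tau> (\<lambda>y. label_diag X m d0 d ls h y a a))"
    by (rule tracial_eq_sum_corner_trace) (use label_diag_in_MC[OF h v m] MB in simp)
  also have "\<dots> = (\<Sum>w<?L. \<Sum>p<m. corner_trace X d \<tau> (\<lambda>y. label_diag X m d0 d ls h y (w * m + p) (w * m + p)))"
    unfolding MB by (rule sum_lessThan_mult_blocks)
  also have "\<dots> = (\<Sum>w<?L. label_trace X d \<tau> m d0 h (ls ! w))"
    unfolding label_trace_def
  proof (rule sum.cong[OF refl], rule sum.cong[OF refl], rule corner_trace_cong)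
    fix w p y assume w: "w \<in> {..<?L}" and p: "p \<in> {..<m}" and y: "y \<in> Xpow X d"
    have lt: "w * m + p < m * ?L"
    proof -
      have "w * m + p < w * m + m" using p by simp
      also have "\<dots> = (w + 1) * m" by simp
      also have "\<dots> \<le> ?L * m" using w by (intro mult_right_mono) auto
      finally show ?thesis by (simp add: mult.commute)
    qed
    have dm: "(w * m + p) div m = w" "(w * m + p) mod m = p" using p m by auto
    show "label_diag X m d0 d ls h y (w * m + p) (w * m + p) = h (label_point d0 y (ls ! w)) p p"
      using lt dm y by (simp add: label_diag_apply)
  qed
  also have "\<dots> = sum_list (map (label_trace X d \<tau> m d0 h) ls)"
    by (simp add: sum_list_sum_nth atLeast0LessThan)
  finally show ?thesis .
qed

lemma label_trace_bound:
  assumes MB: "M = m * L" and m: "m > 0" and h: "h \<in> MC X m d0"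
    and hb: "\<forall>y\<in>Xpow X d0. \<forall>p<m. cmod (h y p p) \<le> 1" and v: "valid_label X d0 d l"
  shows "cmod (label_trace X d \<tau> m d0 h l) \<le> 2 / real L"
proof -
  have "cmod (label_trace X d \<tau> m d0 h l) \<le> (\<Sum>p<m. cmod (corner_trace X d \<tau> (\<lambda>y. h (label_point d0 y l) p p)))"
    unfolding label_trace_def by (rule norm_sum)
  also have "\<dots> \<le> (\<Sum>p<m. 2 / real M)"
  proof (rule sum_mono, rule corner_trace_bound)
    fix p assume p: "p \<in> {..<m}"
    show "continuous_on (Xpow X d) (\<lambda>y. h (label_point d0 y l) p p)" by (rule continuous_on_label_point[OF v h])
    show "cmod (h (label_point d0 y l) p p) \<le> 1" if "y \<in> Xpow X d" for y
      using hb label_point_in_Xpow[OF v that] p by auto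
  qed
  also have "\<dots> = 2 / real L" using MB m tracial_dim_pos by (simp add: field_simps)
  finally show ?thesis .
qed

lemma tracial_label_diag_diff:
  assumes MB: "M = m * L" and m: "m > 0" and h: "h \<in> MC X m d0"
    and hb: "\<forall>y\<in>Xpow X d0. \<forall>p<m. cmod (h y p p) \<le> 1"
    and v1: "\<forall>l\<in>set ls1. valid_label X d0 d l" and v2: "\<forall>l\<in>set ls2. valid_label X d0 d l"
    and l1: "length ls1 = L" and l2: "length ls2 = L"
    and A1: "A \<subseteq># mset ls1" and A2: "A \<subseteq># mset ls2"
  shows "cmod (\<tau> (label_diag X m d0 d ls1 h) - \<tau> (label_diag X m d0 d ls2 h)) \<le> 4 * (real L - real (size A)) / real L"
proof -
  let ?T = "label_trace X d \<tau> m d0 h"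
  have sl: "sum_list (map ?T ls) = sum_mset (image_mset ?T A) + sum_mset (image_mset ?T (mset ls - A))"
    if "A \<subseteq># mset ls" for ls
  proof -
    have "sum_list (map ?T ls) = sum_mset (image_mset ?T (mset ls))"
      by (simp add: sum_mset_sum_list[symmetric])
    also have "mset ls = A + (mset ls - A)" using that by (simp add: subset_mset.add_diff_inverse)
    finally show ?thesis by (metis image_mset_union sum_mset.union)
  qed
  have bnd: "cmod (sum_mset (image_mset ?T (mset ls - A))) \<le> real (L - size A) * (2 / real L)"
    if "A \<subseteq># mset ls" "length ls = L" "\<forall>l\<in>set ls. valid_label X d0 d l" for ls
  proof -
    have "cmod (sum_mset (image_mset ?T (mset ls - A))) \<le> real (size (mset ls - A)) * (2 / real L)"
    proof (rule norm_sum_mset_image_le)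
      fix l assume "l \<in># mset ls - A"
      then have "l \<in> set ls" by (meson in_diffD in_multiset_in_set)
      then show "cmod (?T l) \<le> 2 / real L" using that by (intro label_trace_bound[OF MB m h hb]) auto
    qed
    moreover have "size (mset ls - A) = L - size A" using that by (simp add: size_Diff_submset)
    ultimately show ?thesis by simp
  qed
  have sA: "size A \<le> L" using A1 l1 by (metis size_mset size_mset_mono)
  have L: "L > 0" using MB tracial_dim_pos by (cases L) auto
  have "\<tau> (label_diag X m d0 d ls1 h) - \<tau> (label_diag X m d0 d ls2 h)
      = sum_mset (image_mset ?T (mset ls1 - A)) - sum_mset (image_mset ?T (mset ls2 - A))"
    using tracial_label_diag[OF _ m h v1] tracial_label_diag[OF _ m h v2] MB l1 l2 sl[OF A1] sl[OF A2] by simp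
  also have "cmod \<dots> \<le> real (L - size A) * (2 / real L) + real (L - size A) * (2 / real L)"
    by (rule order_trans[OF norm_triangle_ineq4], rule add_mono) (use bnd A1 A2 l1 l2 v1 v2 in auto)
  also have "\<dots> = 4 * (real L - real (size A)) / real L" using sA by (simp add: of_nat_diff field_simps)
  finally show ?thesis .
qed

end

section \<open>Diagonal entries of contractions\<close>

lemma compact_Xpow:
  fixes X :: "'a::topological_space set"
  assumes "compact X" shows "compact (Xpow X d)"
proof -
  define S' where "S' i = (if i < d then X else {undefined})" for i :: nat
  have eq: "Xpow X d = PiE UNIV S'"
    unfolding Xpow_def S'_def PiE_def Pi_def extensional_def by auto
  have "compactin (product_topology (\<lambda>i. euclidean) UNIV) (PiE UNIV S')"
    unfolding compactin_PiE using assms by (auto simp: S'_def)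
  then show ?thesis unfolding eq euclidean_product_topology by simp
qed

definition entry_sum :: "nat \<Rightarrow> (nat \<Rightarrow> nat \<Rightarrow> complex) \<Rightarrow> real" where
  "entry_sum m A = (\<Sum>a<m. \<Sum>b<m. cmod (A a b))"

lemma mat_norm_set_le_entry_sum:
  assumes v: "(\<Sum>b<(m::nat). (cmod (v b))\<^sup>2) \<le> 1"
  shows "sqrt (\<Sum>a<m. (cmod (\<Sum>b<m. A a b * v b))\<^sup>2) \<le> entry_sum m A"
proof -
  have vb: "cmod (v b) \<le> 1" if "b < m" for b
  proof -
    have "(cmod (v b))\<^sup>2 \<le> (\<Sum>b<m. (cmod (v b))\<^sup>2)"
      by (rule member_le_sum) (use that in auto)
    then have "(cmod (v b))\<^sup>2 \<le> 1\<^sup>2" using v by simp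
    then show ?thesis by (rule power2_le_imp_le) simp
  qed
  have "sqrt (\<Sum>a<m. (cmod (\<Sum>b<m. A a b * v b))\<^sup>2) = L2_set (\<lambda>a. cmod (\<Sum>b<m. A a b * v b)) {..<m}"
    by (simp add: L2_set_def)
  also have "\<dots> \<le> (\<Sum>a<m. \<bar>cmod (\<Sum>b<m. A a b * v b)\<bar>)" by (rule L2_set_le_sum_abs)
  also have "\<dots> \<le> (\<Sum>a<m. \<Sum>b<m. cmod (A a b))"
  proof (rule sum_mono)
    fix a
    have "\<bar>cmod (\<Sum>b<m. A a b * v b)\<bar> \<le> (\<Sum>b<m. cmod (A a b * v b))" by (simp add: norm_sum)
    also have "\<dots> \<le> (\<Sum>b<m. cmod (A a b))"
      by (rule sum_mono) (use vb in \<open>auto simp: norm_mult intro: mult_left_le\<close>)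
    finally show "\<bar>cmod (\<Sum>b<m. A a b * v b)\<bar> \<le> (\<Sum>b<m. cmod (A a b))" .
  qed
  finally show ?thesis unfolding entry_sum_def .
qed

lemma bdd_above_mat_norm_set: "bdd_above {sqrt (\<Sum>a<(m::nat). (cmod (\<Sum>b<m. A a b * v b))\<^sup>2) | v. (\<Sum>b<m. (cmod (v b))\<^sup>2) \<le> 1}"
  by (rule bdd_aboveI[of _ "entry_sum m A"]) (auto intro: mat_norm_set_le_entry_sum)

lemma mat_norm_le_entry_sum: "mat_norm m A \<le> entry_sum m A"
  unfolding mat_norm_def
  by (rule cSup_least) (auto intro: mat_norm_set_le_entry_sum exI[of _ "\<lambda>_. 0"])

lemma norm_diag_le_mat_norm:
  assumes p: "p < m" shows "cmod (A p p) \<le> mat_norm m A"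
proof -
  define v where "v b = (if b = p then 1 else 0 :: complex)" for b
  have vv: "(\<lambda>b. (cmod (v b))\<^sup>2) = (\<lambda>b. if b = p then 1 else 0)" by (auto simp: v_def fun_eq_iff)
  have v1: "(\<Sum>b<m. (cmod (v b))\<^sup>2) \<le> 1" unfolding vv using p by simp
  have sv: "(\<Sum>b<m. A a b * v b) = A a p" for a using p by (simp add: v_def if_distrib cong: if_cong)
  have "cmod (A p p) = sqrt ((cmod (A p p))\<^sup>2)" by simp
  also have "\<dots> \<le> sqrt (\<Sum>a<m. (cmod (A a p))\<^sup>2)"
    by (rule real_sqrt_le_mono, rule member_le_sum) (use p in auto)
  also have "\<dots> = sqrt (\<Sum>a<m. (cmod (\<Sum>b<m. A a b * v b))\<^sup>2)" by (simp add: sv)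
  also have "\<dots> \<le> mat_norm m A" unfolding mat_norm_def
    by (rule cSup_upper) (use v1 bdd_above_mat_norm_set in auto)
  finally show ?thesis .
qed

lemma mc_norm_le_1_diag_bound:
  fixes X :: "'a::topological_space set"
  assumes X: "compact X" and h: "h \<in> MC X m d" and n: "mc_norm X m d h \<le> 1"
  shows "\<forall>y\<in>Xpow X d. \<forall>p<m. cmod (h y p p) \<le> 1"
proof (intro ballI allI impI)
  fix y p assume y: "y \<in> Xpow X d" and p: "p < m"
  have c: "continuous_on (Xpow X d) (\<lambda>y. entry_sum m (h y))"
    unfolding entry_sum_def using h unfolding MC_def by (auto intro!: continuous_intros)
  have "compact ((\<lambda>y. entry_sum m (h y)) ` Xpow X d)"
    by (rule compact_continuous_image[OF c compact_Xpow[OF X]])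
  then have "bdd_above ((\<lambda>y. entry_sum m (h y)) ` Xpow X d)" by (rule bounded_imp_bdd_above[OF compact_imp_bounded])
  then obtain K where K: "\<And>y. y \<in> Xpow X d \<Longrightarrow> entry_sum m (h y) \<le> K" by (auto simp: bdd_above_def)
  have bdd: "bdd_above ((\<lambda>y. mat_norm m (h y)) ` Xpow X d)"
    by (rule bdd_aboveI[of _ K]) (use K mat_norm_le_entry_sum order_trans in blast)
  have "cmod (h y p p) \<le> mat_norm m (h y)" by (rule norm_diag_le_mat_norm[OF p])
  also have "\<dots> \<le> mc_norm X m d h" unfolding mc_norm_def by (rule cSup_upper) (use y bdd in auto)
  finally show "cmod (h y p p) \<le> 1" using n by simp
qed

section \<open>Growth of the matrix sizes\<close>

lemma eventually_le_partial_multiplicity: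
  assumes "enat S \<le> supernat f p"
  shows "eventually (\<lambda>j. S \<le> (\<Sum>l\<in>{1..<j}. multiplicity p (f l))) sequentially"
proof (cases "S = 0")
  case False
  then have "enat (S - 1) < supernat f p"
    using assms by (metis One_nat_def Suc_ile_eq Suc_pred not_gr_zero)
  then obtain N where "enat (S - 1) < enat (\<Sum>l\<in>{1..N}. multiplicity p (f l))"
    unfolding supernat_def less_SUP_iff by auto
  then have SN: "S \<le> (\<Sum>l\<in>{1..N}. multiplicity p (f l))" using False by simp
  show ?thesis unfolding eventually_sequentially
  proof (intro exI[of _ "Suc N"] allI impI)
    fix j assume "Suc N \<le> j"
    then have "(\<Sum>l\<in>{1..N}. multiplicity p (f l)) \<le> (\<Sum>l\<in>{1..<j}. multiplicity p (f l))"
      by (intro sum_mono2) auto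
    then show "S \<le> (\<Sum>l\<in>{1..<j}. multiplicity p (f l))" using SN by simp
  qed
qed simp

lemma eventually_prod_dvd:
  fixes fE fF :: "nat \<Rightarrow> nat"
  assumes posE: "\<forall>l\<ge>1. fE l > 0" and posF: "\<forall>l\<ge>1. fF l > 0"
    and sup: "\<forall>p. prime p \<longrightarrow> supernat fE p = supernat fF p"
  shows "eventually (\<lambda>j. (\<Prod>l\<in>{1..<i}. fE l) dvd (\<Prod>l\<in>{1..<j}. fF l)) sequentially"
proof -
  let ?P = "\<Prod>l\<in>{1..<i}. fE l"
  let ?Q = "\<lambda>j. \<Prod>l\<in>{1..<j}. fF l"
  have mP: "multiplicity p ?P = (\<Sum>l\<in>{1..<i}. multiplicity p (fE l))" if "prime p" for p
    by (rule prime_elem_multiplicity_prod_distrib) (use that posE in \<open>auto simp: image_iff\<close>)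
  have mQ: "multiplicity p (?Q j) = (\<Sum>l\<in>{1..<j}. multiplicity p (fF l))" if "prime p" for p j
    by (rule prime_elem_multiplicity_prod_distrib) (use that posF in \<open>auto simp: image_iff\<close>)
  have "eventually (\<lambda>j. multiplicity p ?P \<le> multiplicity p (?Q j)) sequentially" if p: "prime p" for p
  proof -
    have "enat (multiplicity p ?P) \<le> enat (\<Sum>l\<in>{1..i}. multiplicity p (fE l))"
      unfolding mP[OF p] by (intro enat_ord_simps(1)[THEN iffD2] sum_mono2) auto
    also have "\<dots> \<le> supernat fE p" unfolding supernat_def by (rule SUP_upper) simp
    also have "\<dots> = supernat fF p" using sup p by simp
    finally show ?thesis unfolding mQ[OF p] by (rule eventually_le_partial_multiplicity)
  qed
  then have "eventually (\<lambda>j. \<forall>p\<in>prime_factors ?P. multiplicity p ?P \<le> multiplicity p (?Q j)) sequentially"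
    by (intro eventually_ball_finite) auto
  then show ?thesis
  proof (rule eventually_mono)
    fix j assume le: "\<forall>p\<in>prime_factors ?P. multiplicity p ?P \<le> multiplicity p (?Q j)"
    show "?P dvd ?Q j"
    proof (rule multiplicity_le_imp_dvd)
      show "?P \<noteq> 0" using posE by (simp add: prod_pos)
      show "multiplicity p ?P \<le> multiplicity p (?Q j)" if "prime p" for p :: nat
        using le that by (cases "p \<in> prime_factors ?P") (auto simp: prime_factors_multiplicity)
    qed
  qed
qed

lemma lim_partial_prod_le:
  fixes r :: "nat \<Rightarrow> real"
  assumes r01: "\<forall>l\<ge>j. 0 \<le> r l \<and> r l \<le> 1" and k: "j < k"
  shows "lim (\<lambda>J. \<Prod>l\<in>{j..j + J}. r l) \<le> (\<Prod>l\<in>{j..<k}. r l)"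
proof -
  define P where "P J = (\<Prod>l\<in>{j..j + J}. r l)" for J
  have Pn: "0 \<le> P J" "P J \<le> 1" for J unfolding P_def using r01 by (auto intro!: prod_nonneg prod_le_1)
  have dec: "decseq P"
  proof (rule decseq_SucI)
    fix J
    have "P (Suc J) = r (j + Suc J) * P J" unfolding P_def by (simp add: atLeastAtMostSuc_conv mult.commute)
    also have "\<dots> \<le> 1 * P J" using Pn r01 by (intro mult_right_mono) auto
    finally show "P (Suc J) \<le> P J" by simp
  qed
  have "Bseq P" by (rule BseqI'[of _ 1]) (use Pn in \<open>simp add: abs_le_iff\<close>)
  then have "P \<longlonglongrightarrow> lim P"
    using Bseq_monoseq_convergent[OF _ decseq_imp_monoseq[OF dec]] by (simp add: convergent_LIMSEQ_iff)
  then have "lim P \<le> P (k - j - 1)" by (rule decseq_ge[OF dec])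
  moreover have "{j..<k} = {j..j + (k - j - 1)}" using k by auto
  ultimately show ?thesis unfolding P_def by simp
qed

lemma eventually_tail_prod_ge:
  fixes r :: "nat \<Rightarrow> real"
  assumes r01: "\<forall>l. 0 \<le> r l \<and> r l \<le> 1"
    and lim: "(\<lambda>i. lim (\<lambda>j. \<Prod>l\<in>{i..i + j}. r l)) \<longlonglongrightarrow> 1" and e: "\<epsilon> > 0"
  shows "eventually (\<lambda>j. \<forall>k>j. 1 - \<epsilon> \<le> (\<Prod>l\<in>{j..<k}. r l)) sequentially"
  using order_tendstoD(1)[OF lim, of "1 - \<epsilon>"] e
  by (auto elim!: eventually_mono dest: order.strict_trans2[OF _ lim_partial_prod_le] intro: less_imp_le simp: r01)

lemma vm_ratio_tendsto:
  assumes R: "(\<lambda>i. (\<Prod>l\<in>{1..i}. real (vn c s l + kE l)) / (\<Prod>l\<in>{1..i}. real (vn c s l + kF l))) \<longlonglongrightarrow> 1"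
    and n0: "n0 \<ge> 1"
  shows "(\<lambda>j. real (vm n0 c s kE j) / real (vm n0 c s kF j)) \<longlonglongrightarrow> 1"
    and "(\<lambda>j. real (vm n0 c s kF j) / real (vm n0 c s kE j)) \<longlonglongrightarrow> 1"
proof -
  have "{1..<Suc j} = {1..j}" for j by auto
  then have eq: "real (vm n0 c s kE (Suc j)) / real (vm n0 c s kF (Suc j))
     = (\<Prod>l\<in>{1..j}. real (vn c s l + kE l)) / (\<Prod>l\<in>{1..j}. real (vn c s l + kF l))" for j
    unfolding vm_def using n0 by (simp add: of_nat_prod)
  show A: "(\<lambda>j. real (vm n0 c s kE j) / real (vm n0 c s kF j)) \<longlonglongrightarrow> 1"
    by (rule LIMSEQ_imp_Suc) (simp only: eq R)
  show "(\<lambda>j. real (vm n0 c s kF j) / real (vm n0 c s kE j)) \<longlonglongrightarrow> 1"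
    using tendsto_inverse[OF A] by simp
qed

section \<open>The approximating maps\<close>

definition step_fits :: "nat \<Rightarrow> (nat \<Rightarrow> nat) \<Rightarrow> (nat \<Rightarrow> nat \<Rightarrow> nat) \<Rightarrow> (nat \<Rightarrow> nat) \<Rightarrow> (nat \<Rightarrow> nat)
    \<Rightarrow> nat \<Rightarrow> nat \<Rightarrow> bool" where
  "step_fits n0 c s kG kH i j \<longleftrightarrow> i < j \<and> vm n0 c s kG i dvd vm n0 c s kH j
     \<and> (\<Prod>l\<in>{i..<j}. vn c s l) * vm n0 c s kG i \<le> vm n0 c s kH j"

definition good_step :: "nat \<Rightarrow> (nat \<Rightarrow> nat) \<Rightarrow> (nat \<Rightarrow> nat \<Rightarrow> nat) \<Rightarrow> (nat \<Rightarrow> nat) \<Rightarrow> (nat \<Rightarrow> nat)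
    \<Rightarrow> real \<Rightarrow> nat \<Rightarrow> nat \<Rightarrow> bool" where
  "good_step n0 c s kG kH \<epsilon> i j \<longleftrightarrow> step_fits n0 c s kG kH i j
     \<and> (1 - \<epsilon>) * real (vm n0 c s kG j) \<le> real (vm n0 c s kH j)
     \<and> (\<forall>k>j. 1 - \<epsilon> \<le> (\<Prod>l\<in>{j..<k}. real (vn c s l) / real (vn c s l + kG l)))"

definition step_labels :: "'a set \<Rightarrow> nat \<Rightarrow> (nat \<Rightarrow> nat) \<Rightarrow> (nat \<Rightarrow> nat \<Rightarrow> nat) \<Rightarrow> (nat \<Rightarrow> nat)
   \<Rightarrow> (nat \<Rightarrow> nat \<Rightarrow> nat \<Rightarrow> 'a) \<Rightarrow> (nat \<Rightarrow> nat) \<Rightarrow> nat \<Rightarrow> nat \<Rightarrow> 'a label list" where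
  "step_labels X n0 c s kG xG kH i j =
     filter isl (chain_labels c s kG xG i j)
     @ take (vm n0 c s kH j div vm n0 c s kG i - length (filter isl (chain_labels c s kG xG i j)))
         (filter (\<lambda>l. \<not> isl l) (chain_labels c s kG xG i j)
          @ replicate (vm n0 c s kH j div vm n0 c s kG i) (Inr (SOME z. z \<in> Xpow X (vd c i))))"

definition step_map :: "'a set \<Rightarrow> nat \<Rightarrow> (nat \<Rightarrow> nat) \<Rightarrow> (nat \<Rightarrow> nat \<Rightarrow> nat) \<Rightarrow> (nat \<Rightarrow> nat)
   \<Rightarrow> (nat \<Rightarrow> nat \<Rightarrow> nat \<Rightarrow> 'a) \<Rightarrow> (nat \<Rightarrow> nat) \<Rightarrow> nat \<Rightarrow> nat \<Rightarrow> 'a vmat \<Rightarrow> 'a vmat" where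
  "step_map X n0 c s kG xG kH i j =
     label_diag X (vm n0 c s kG i) (vd c i) (vd c j) (step_labels X n0 c s kG xG kH i j)"

lemma Xpow_nonempty: "X \<noteq> {} \<Longrightarrow> Xpow X d \<noteq> {}"
  unfolding Xpow_def by (simp add: PiE_eq_empty_iff)

lemma filter_isl_step_labels:
  "filter isl (step_labels X n0 c s kG xG kH i j) = filter isl (chain_labels c s kG xG i j)"
proof -
  have "filter isl (take q (filter (\<lambda>l. \<not> isl l) L @ replicate R (Inr z))) = []" for q L R and z :: "nat \<Rightarrow> 'a"
    by (rule filter_False) (auto dest: in_set_takeD)
  then show ?thesis unfolding step_labels_def by simp
qed

lemma mset_prefix_subset_step_labels:
  fixes c :: "nat \<Rightarrow> nat" and s :: "nat \<Rightarrow> nat \<Rightarrow> nat" and kG :: "nat \<Rightarrow> nat"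
    and xG :: "nat \<Rightarrow> nat \<Rightarrow> nat \<Rightarrow> 'a" and i j :: nat
  defines "L \<equiv> chain_labels c s kG xG i j"
  assumes "q \<le> vm n0 c s kH j div vm n0 c s kG i - length (filter isl L)"
    and "q \<le> length (filter (\<lambda>l. \<not> isl l) L)"
  shows "mset (filter isl L @ take q (filter (\<lambda>l. \<not> isl l) L)) \<subseteq># mset (step_labels X n0 c s kG xG kH i j)"
proof -
  let ?R = "vm n0 c s kH j div vm n0 c s kG i"
  let ?rest = "take (?R - length (filter isl L))
                 (filter (\<lambda>l. \<not> isl l) L @ replicate ?R (Inr (SOME z. z \<in> Xpow X (vd c i))))"
  have "take q (filter (\<lambda>l. \<not> isl l) L) = take q ?rest"
    using assms(2,3) by (simp add: min_def)
  then have "mset (take q (filter (\<lambda>l. \<not> isl l) L)) \<subseteq># mset ?rest"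
    by (metis append_take_drop_id mset_append mset_subset_eq_add_left)
  then show ?thesis unfolding step_labels_def L_def by simp
qed

context
  fixes X :: "'a::topological_space set" and n0 :: nat and c :: "nat \<Rightarrow> nat" and s :: "nat \<Rightarrow> nat \<Rightarrow> nat"
    and kG kH :: "nat \<Rightarrow> nat" and xG :: "nat \<Rightarrow> nat \<Rightarrow> nat \<Rightarrow> 'a" and i j :: nat
  assumes G: "point_data X c kG xG" and n0: "1 \<le> n0" and i: "1 \<le> i"
    and fits: "step_fits n0 c s kG kH i j"
begin

lemma length_filter_isl_chain_labels_le:
  "length (filter isl (chain_labels c s kG xG i j)) \<le> vm n0 c s kH j div vm n0 c s kG i"
proof -
  have "i < j" using fits unfolding step_fits_def by simp
  then have "length (filter isl (chain_labels c s kG xG i j)) * vm n0 c s kG i \<le> vm n0 c s kH j"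
    using fits unfolding step_fits_def by (simp add: length_filter_isl_chain_labels)
  then show ?thesis using vm_pos[OF G n0] by (simp add: less_eq_div_iff_mult_less_eq)
qed

lemma vm_mult_length_step_labels:
  "vm n0 c s kG i * length (step_labels X n0 c s kG xG kH i j) = vm n0 c s kH j"
proof -
  have "length (step_labels X n0 c s kG xG kH i j) = vm n0 c s kH j div vm n0 c s kG i"
    using length_filter_isl_chain_labels_le unfolding step_labels_def by simp
  then show ?thesis using fits unfolding step_fits_def by simp
qed

lemma valid_step_labels:
  assumes "X \<noteq> {}"
  shows "\<forall>l\<in>set (step_labels X n0 c s kG xG kH i j). valid_label X (vd c i) (vd c j) l"
proof
  fix l assume l: "l \<in> set (step_labels X n0 c s kG xG kH i j)"
  let ?z = "SOME z. z \<in> Xpow X (vd c i)"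
  have "?z \<in> Xpow X (vd c i)" using Xpow_nonempty[OF assms] by (simp add: some_in_eq)
  moreover have "l \<in> set (chain_labels c s kG xG i j) \<or> l = Inr ?z"
    using l unfolding step_labels_def by (auto dest: in_set_takeD)
  moreover have "i < j" using fits unfolding step_fits_def by simp
  ultimately show "valid_label X (vd c i) (vd c j) l"
    using valid_chain_labels[OF G i] by (auto simp: valid_label_def)
qed

lemma step_map_diagonal:
  assumes "X \<noteq> {}"
  shows "is_diagonal X (vm n0 c s kG i) (vd c i) (vm n0 c s kH j) (vd c j) (step_map X n0 c s kG xG kH i j)"
  using label_diag_diag_decomp[OF vm_pos[OF G n0] valid_step_labels[OF assms] vm_mult_length_step_labels[symmetric]]
  unfolding is_diagonal_def step_map_def by blast

end

lemma real_prod_vn_mult_vm: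
  assumes G: "point_data X c kG xG" and "1 \<le> i" "i \<le> j"
  shows "real ((\<Prod>l\<in>{i..<j}. vn c s l) * vm n0 c s kG i)
       = real (vm n0 c s kG j) * (\<Prod>l\<in>{i..<j}. real (vn c s l) / real (vn c s l + kG l))"
proof -
  have "0 < (\<Prod>l\<in>{i..<j}. vn c s l + kG l)"
  proof (intro prod_pos)
    fix l assume "l \<in> {i..<j}"
    then have "1 \<le> kG l" using point_data_k_ge_1[OF G] assms(2) by simp
    then show "0 < vn c s l + kG l" by simp
  qed
  then have "0 < real (\<Prod>l\<in>{i..<j}. vn c s l + kG l)" by (simp only: of_nat_0_less_iff)
  then have "(\<Prod>l\<in>{i..<j}. real (vn c s l + kG l)) \<noteq> 0" unfolding of_nat_prod by linarith
  then show ?thesis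
    unfolding vm_split[OF assms(2,3), of n0 c s kG] by (simp add: of_nat_prod prod_dividef)
qed

lemma proj_fraction_bounds: "0 \<le> real (vn c s l) / real (vn c s l + k l) \<and> real (vn c s l) / real (vn c s l + k l) \<le> 1"
  by (cases "vn c s l + k l = 0") (simp_all add: divide_le_eq_1 flip: of_nat_add)

lemma prod_proj_fraction_le:
  assumes G: "point_data X c kG xG" and i: "1 \<le> i" and ij: "i < j"
  shows "(\<Prod>l\<in>{i..<j}. real (vn c s l) / real (vn c s l + kG l)) \<le> 1 - 1 / real (vn c s i + 1)"
proof -
  let ?r = "\<lambda>l. real (vn c s l) / real (vn c s l + kG l)"
  have "(\<Prod>l\<in>{i..<j}. ?r l) = ?r i * (\<Prod>l\<in>{Suc i..<j}. ?r l)"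
    using ij by (simp add: prod.atLeast_Suc_lessThan)
  also have "\<dots> \<le> ?r i" using proj_fraction_bounds by (intro mult_left_le prod_le_1 prod_nonneg) auto
  also have "\<dots> \<le> real (vn c s i) / real (vn c s i + 1)"
    using point_data_k_ge_1[OF G i] by (intro divide_left_mono) auto
  also have "\<dots> = 1 - 1 / real (vn c s i + 1)" by (simp add: field_simps)
  finally show ?thesis .
qed

text \<open>Since \<open>k i \<ge> 1\<close>, the proportion of coordinate projections in phi(i,j) stays below
  \<open>1 - 1/(n i + 1)\<close>, so a size ratio close enough to 1 leaves room for all of them.\<close>

lemma good_step_intro:
  assumes G: "point_data X c kG xG" and n0: "1 \<le> n0" and i: "1 \<le> i" and ij: "i < j"
    and dvd: "vm n0 c s kG i dvd vm n0 c s kH j"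
    and ratio: "1 - min \<epsilon> (1 / real (vn c s i + 1)) < real (vm n0 c s kH j) / real (vm n0 c s kG j)"
    and tail: "\<forall>k>j. 1 - \<epsilon> \<le> (\<Prod>l\<in>{j..<k}. real (vn c s l) / real (vn c s l + kG l))"
  shows "good_step n0 c s kG kH \<epsilon> i j"
proof -
  define \<eta> where "\<eta> = min \<epsilon> (1 / real (vn c s i + 1))"
  have mGj: "0 < vm n0 c s kG j" using vm_pos[OF G n0] .
  have ratio': "(1 - \<eta>) * real (vm n0 c s kG j) \<le> real (vm n0 c s kH j)"
    using ratio mGj unfolding \<eta>_def[symmetric] by (simp add: field_simps)
  have "(\<Prod>l\<in>{i..<j}. real (vn c s l) / real (vn c s l + kG l)) \<le> 1 - \<eta>"
    using prod_proj_fraction_le[OF G i ij, where s=s] unfolding \<eta>_def by linarith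
  then have "real ((\<Prod>l\<in>{i..<j}. vn c s l) * vm n0 c s kG i) \<le> real (vm n0 c s kG j) * (1 - \<eta>)"
    unfolding real_prod_vn_mult_vm[OF G i less_imp_le[OF ij]] using mGj by (intro mult_left_mono) auto
  also have "\<dots> \<le> real (vm n0 c s kH j)" using ratio' by (simp add: mult.commute)
  finally have "(\<Prod>l\<in>{i..<j}. vn c s l) * vm n0 c s kG i \<le> vm n0 c s kH j" by linarith
  moreover have "(1 - \<epsilon>) * real (vm n0 c s kG j) \<le> (1 - \<eta>) * real (vm n0 c s kG j)"
    unfolding \<eta>_def by (intro mult_right_mono) auto
  then have "(1 - \<epsilon>) * real (vm n0 c s kG j) \<le> real (vm n0 c s kH j)" using ratio' by linarith
  ultimately show ?thesis unfolding good_step_def step_fits_def using ij dvd tail by auto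
qed

lemma good_step_exists:
  assumes G: "point_data X c kG xG" and H: "point_data X c kH xH" and n0: "1 \<le> n0"
    and bG: "(\<lambda>i. lim (\<lambda>j. \<Prod>l\<in>{i..i + j}. real (vn c s l) / real (vn c s l + kG l))) \<longlonglongrightarrow> 1"
    and rat: "(\<lambda>j. real (vm n0 c s kH j) / real (vm n0 c s kG j)) \<longlonglongrightarrow> 1"
    and sup: "\<forall>p. prime p \<longrightarrow> supernat (\<lambda>l. vn c s l + kG l) p = supernat (\<lambda>l. vn c s l + kH l) p"
    and e: "0 < \<epsilon>" and i: "1 \<le> i"
  shows "\<exists>j. good_step n0 c s kG kH \<epsilon> i j"
proof -
  have "eventually (\<lambda>j. vm n0 c s kG i dvd vm n0 c s kH j) sequentially"
  proof -
    have "eventually (\<lambda>j. (\<Prod>l\<in>{1..<i}. vn c s l + kG l) dvd (\<Prod>l\<in>{1..<j}. vn c s l + kH l)) sequentially"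
      by (rule eventually_prod_dvd) (use G H sup in \<open>auto simp: point_data_def\<close>)
    then show ?thesis unfolding vm_def by eventually_elim (rule mult_dvd_mono, auto)
  qed
  moreover have "eventually (\<lambda>j. 1 - min \<epsilon> (1 / real (vn c s i + 1)) < real (vm n0 c s kH j) / real (vm n0 c s kG j))
      sequentially"
    using order_tendstoD(1)[OF rat] e by simp
  moreover have "eventually (\<lambda>j. \<forall>k>j. 1 - \<epsilon> \<le> (\<Prod>l\<in>{j..<k}. real (vn c s l) / real (vn c s l + kG l)))
      sequentially"
    by (rule eventually_tail_prod_ge[OF _ bG e]) (use proj_fraction_bounds in blast)
  moreover have "eventually (\<lambda>j. i < j) sequentially" by (rule eventually_gt_at_top)
  ultimately have "eventually (\<lambda>j. good_step n0 c s kG kH \<epsilon> i j) sequentially"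
    by eventually_elim (rule good_step_intro[OF G n0 i])
  then show ?thesis by (metis eventually_sequentially order_refl)
qed

lemma proj_fraction_chain_labels:
  assumes "j < k"
  shows "real (length (filter isl (chain_labels c s kG xG j k))) / real (length (chain_labels c s kG xG j k))
       = (\<Prod>l\<in>{j..<k}. real (vn c s l) / real (vn c s l + kG l))"
  using assms by (simp add: length_filter_isl_chain_labels length_chain_labels of_nat_prod prod_dividef)

context
  fixes X :: "'a::topological_space set" and n0 :: nat and c :: "nat \<Rightarrow> nat" and s :: "nat \<Rightarrow> nat \<Rightarrow> nat"
    and kG kH :: "nat \<Rightarrow> nat" and xG xH :: "nat \<Rightarrow> nat \<Rightarrow> nat \<Rightarrow> 'a" and \<epsilon> :: real and i j k :: nat
  assumes G: "point_data X c kG xG" and H: "point_data X c kH xH" and n0: "1 \<le> n0"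
    and Xne: "X \<noteq> {}" and i: "1 \<le> i"
    and step1: "good_step n0 c s kG kH \<epsilon> i j" and step2: "step_fits n0 c s kH kG j k"
begin

lemma step_indices: "i < j" "j < k" "1 \<le> j"
  using step1 step2 i unfolding good_step_def step_fits_def by auto

lemma vm_mult_length_composed_step_labels:
  "vm n0 c s kG i * length (compose_labels (vd c i) (step_labels X n0 c s kH xH kG j k) (step_labels X n0 c s kG xG kH i j))
   = vm n0 c s kG k"
proof -
  have fits1: "step_fits n0 c s kG kH i j" using step1 unfolding good_step_def by simp
  have "vm n0 c s kG i * length (compose_labels (vd c i) (step_labels X n0 c s kH xH kG j k) (step_labels X n0 c s kG xG kH i j))
      = vm n0 c s kG i * length (step_labels X n0 c s kG xG kH i j) * length (step_labels X n0 c s kH xH kG j k)"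
    by (simp add: mult_ac)
  also have "\<dots> = vm n0 c s kG k"
    using vm_mult_length_step_labels[OF G n0 i fits1] vm_mult_length_step_labels[OF H n0 step_indices(3) step2] by simp
  finally show ?thesis .
qed

lemma step_maps_compose:
  "step_map X n0 c s kH xH kG j k \<circ> step_map X n0 c s kG xG kH i j
   = label_diag X (vm n0 c s kG i) (vd c i) (vd c k)
       (compose_labels (vd c i) (step_labels X n0 c s kH xH kG j k) (step_labels X n0 c s kG xG kH i j))"
proof
  have fits1: "step_fits n0 c s kG kH i j" using step1 unfolding good_step_def by simp
  fix f
  show "(step_map X n0 c s kH xH kG j k \<circ> step_map X n0 c s kG xG kH i j) f = label_diag X (vm n0 c s kG i) (vd c i) (vd c k)
       (compose_labels (vd c i) (step_labels X n0 c s kH xH kG j k) (step_labels X n0 c s kG xG kH i j)) f"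
    unfolding step_map_def comp_def
    by (rule label_diag_compose[OF vm_mult_length_step_labels[OF G n0 i fits1, symmetric] vm_pos[OF G n0]
          valid_step_labels[OF H n0 step_indices(3) step2 Xne] valid_step_labels[OF G n0 i fits1 Xne]])
qed

lemma step_maps_same_proj_part:
  "\<exists>Lam. diag_decomp X (vm n0 c s kG i) (vd c i) (vm n0 c s kG k) (vd c k)
           (step_map X n0 c s kH xH kG j k \<circ> step_map X n0 c s kG xG kH i j) Lam
      \<and> diag_decomp X (vm n0 c s kG i) (vd c i) (vm n0 c s kG k) (vd c k) (conn_maps X n0 c s kG xG i k) Lam"
proof (intro exI conjI)
  have fits1: "step_fits n0 c s kG kH i j" using step1 unfolding good_step_def by simp
  have ik: "i < k" using step_indices by simp
  let ?P = "compose_labels (vd c i) (step_labels X n0 c s kH xH kG j k) (step_labels X n0 c s kG xG kH i j)"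
  have "proj_part (vd c i) ?P = proj_part (vd c i) (chain_labels c s kG xG i k)"
    unfolding proj_part_def chain_labels_split[OF G i step_indices(1,2)] filter_isl_compose_labels
      filter_isl_step_labels filter_isl_chain_labels_indep[of c s kH xH j k kG xG] ..
  moreover note vm_mult_length_composed_step_labels[symmetric]
  ultimately show "diag_decomp X (vm n0 c s kG i) (vd c i) (vm n0 c s kG k) (vd c k)
           (step_map X n0 c s kH xH kG j k \<circ> step_map X n0 c s kG xG kH i j)
           (proj_part (vd c i) (chain_labels c s kG xG i k))"
    unfolding step_maps_compose
    using label_diag_diag_decomp[OF vm_pos[OF G n0] valid_compose_labels[OF valid_step_labels[OF H n0 step_indices(3) step2 Xne]
          valid_step_labels[OF G n0 i fits1 Xne]]] by simp
  show "diag_decomp X (vm n0 c s kG i) (vd c i) (vm n0 c s kG k) (vd c k) (conn_maps X n0 c s kG xG i k)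
           (proj_part (vd c i) (chain_labels c s kG xG i k))"
    unfolding conn_maps_eq_label_diag[OF G n0 i ik]
    by (rule label_diag_diag_decomp[OF vm_pos[OF G n0] valid_chain_labels[OF G i ik]])
       (simp add: vm_mult_length_chain_labels[OF i ik])
qed

lemma length_chain_labels_pos: "0 < length (chain_labels c s kG xG i j)"
  using vm_mult_length_chain_labels[OF i step_indices(1), of n0 c s kG xG] vm_pos[OF G n0, where s=s and l=j]
  by (cases "length (chain_labels c s kG xG i j)") auto

lemma kept_fraction_ge:
  defines "L \<equiv> chain_labels c s kG xG i j" and "R \<equiv> vm n0 c s kH j div vm n0 c s kG i"
  assumes "0 \<le> \<epsilon>"
  shows "1 - \<epsilon> \<le> real (length (filter isl L) + min (R - length (filter isl L)) (length (filter (\<lambda>l. \<not> isl l) L)))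
                 / real (length L)"
    (is "_ \<le> real ?kept / _")
proof -
  have fits1: "step_fits n0 c s kG kH i j" using step1 unfolding good_step_def by simp
  show ?thesis
  proof (cases "length L \<le> R")
    case True
    then have "?kept = length L" using sum_length_filter_compl[of isl L] by auto
    then show ?thesis using length_chain_labels_pos assms unfolding L_def by simp
  next
    case False
    then have "?kept = R"
      using length_filter_isl_chain_labels_le[OF G n0 i fits1] sum_length_filter_compl[of isl L]
      unfolding L_def R_def by auto
    moreover have "real R / real (length L) = real (vm n0 c s kH j) / real (vm n0 c s kG j)"
    proof -
      have "vm n0 c s kG i * R = vm n0 c s kH j" using fits1 unfolding step_fits_def R_def by simp
      then have "real (vm n0 c s kH j) = real (vm n0 c s kG i) * real R" by (metis of_nat_mult)
      moreover have "real (vm n0 c s kG j) = real (vm n0 c s kG i) * real (length L)"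
        using vm_mult_length_chain_labels[OF i step_indices(1), of n0 c s kG xG] unfolding L_def
        by (metis of_nat_mult)
      ultimately show ?thesis using vm_pos[OF G n0, where s=s and l=i] by simp
    qed
    moreover have "1 - \<epsilon> \<le> real (vm n0 c s kH j) / real (vm n0 c s kG j)"
      using step1 vm_pos[OF G n0, where s=s and l=j] unfolding good_step_def by (simp add: field_simps)
    ultimately show ?thesis by simp
  qed
qed

text \<open>The common blocks are the coordinate projections of phi(j,k) composed with the blocks of
  phi(i,j) kept by the first step; their two fractions are bounded by requirement (b) and by the
  ratio of the sizes.\<close>

lemma common_blocks:
  assumes "0 \<le> \<epsilon>" "\<epsilon> \<le> 1"
  shows "\<exists>A. A \<subseteq># mset (compose_labels (vd c i) (step_labels X n0 c s kH xH kG j k) (step_labels X n0 c s kG xG kH i j))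
           \<and> A \<subseteq># mset (chain_labels c s kG xG i k)
           \<and> (1 - \<epsilon>) * (1 - \<epsilon>) * real (length (chain_labels c s kG xG i k)) \<le> real (size A)"
proof -
  let ?L1 = "chain_labels c s kG xG i j" and ?L2 = "chain_labels c s kG xG j k"
  let ?R = "vm n0 c s kH j div vm n0 c s kG i" and ?N = "length (filter isl ?L1)"
    and ?P = "length (filter (\<lambda>l. \<not> isl l) ?L1)"
  have fits1: "step_fits n0 c s kG kH i j" using step1 unfolding good_step_def by simp
  define q where "q = min (?R - ?N) ?P"
  define C0 where "C0 = filter isl ?L1 @ take q (filter (\<lambda>l. \<not> isl l) ?L1)"
  define A where "A = mset (compose_labels (vd c i) (filter isl ?L2) C0)"
  have "filter isl ?L2 = filter isl (step_labels X n0 c s kH xH kG j k)"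
    by (simp add: filter_isl_step_labels filter_isl_chain_labels_indep[of c s kG xG j k kH xH])
  then have "mset (filter isl ?L2) \<subseteq># mset (step_labels X n0 c s kH xH kG j k)"
    by (metis mset_filter multiset_filter_subset)
  moreover have "mset C0 \<subseteq># mset (step_labels X n0 c s kG xG kH i j)"
    unfolding C0_def q_def by (rule mset_prefix_subset_step_labels) auto
  ultimately have A1: "A \<subseteq># mset (compose_labels (vd c i) (step_labels X n0 c s kH xH kG j k) (step_labels X n0 c s kG xG kH i j))"
    unfolding A_def by (rule mset_compose_labels_mono)
  have "mset C0 \<subseteq># mset (filter isl ?L1) + mset (filter (\<lambda>l. \<not> isl l) ?L1)"
    unfolding C0_def mset_append by (intro subset_mset.add_left_mono) (metis append_take_drop_id mset_append mset_subset_eq_add_left)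
  then have "mset C0 \<subseteq># mset ?L1" by (simp only: mset_filter multiset_partition[symmetric])
  moreover have "mset (filter isl ?L2) \<subseteq># mset ?L2" by (metis mset_filter multiset_filter_subset)
  ultimately have A2: "A \<subseteq># mset (chain_labels c s kG xG i k)"
    unfolding A_def chain_labels_split[OF G i step_indices(1,2)] by (intro mset_compose_labels_mono)
  have r1: "1 - \<epsilon> \<le> real (length (filter isl ?L2)) / real (length ?L2)"
    unfolding proj_fraction_chain_labels[OF step_indices(2)] using step1 step_indices(2) unfolding good_step_def by blast
  have L1pos: "0 < length ?L1" by (rule length_chain_labels_pos)
  have r2: "1 - \<epsilon> \<le> real (?N + q) / real (length ?L1)"
    unfolding q_def by (rule kept_fraction_ge[OF assms(1)])
  define \<rho> where "\<rho> = (real (length (filter isl ?L2)) / real (length ?L2)) * (real (?N + q) / real (length ?L1))"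
  have "size A = length (filter isl ?L2) * (?N + q)" unfolding A_def C0_def q_def by simp
  moreover have "length (chain_labels c s kG xG i k) = length ?L2 * length ?L1"
    unfolding chain_labels_split[OF G i step_indices(1,2)] by simp
  ultimately have sizeA: "real (size A) = \<rho> * real (length (chain_labels c s kG xG i k))"
    unfolding \<rho>_def using L1pos length_filter_le[of isl ?L2] by (cases "length ?L2 = 0") (auto simp: field_simps)
  have "(1 - \<epsilon>) * (1 - \<epsilon>) \<le> \<rho>" unfolding \<rho>_def using r1 r2 assms by (intro mult_mono) auto
  then have "(1 - \<epsilon>) * (1 - \<epsilon>) * real (length (chain_labels c s kG xG i k)) \<le> real (size A)"
    unfolding sizeA by (rule mult_right_mono) simp
  then show ?thesis using A1 A2 by blast
qed

lemma tracial_step_maps_close: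
  assumes X: "compact X" and e: "0 < \<epsilon>"
    and h: "h \<in> MC X (vm n0 c s kG i) (vd c i)" and hn: "mc_norm X (vm n0 c s kG i) (vd c i) h \<le> 1"
    and tau: "tracial_state X (vm n0 c s kG k) (vd c k) \<tau>"
  shows "cmod (\<tau> (step_map X n0 c s kH xH kG j k (step_map X n0 c s kG xG kH i j h))
              - \<tau> (conn_maps X n0 c s kG xG i k h)) < 8 * \<epsilon>"
proof -
  have fits1: "step_fits n0 c s kG kH i j" using step1 unfolding good_step_def by simp
  have ik: "i < k" using step_indices by simp
  let ?P = "compose_labels (vd c i) (step_labels X n0 c s kH xH kG j k) (step_labels X n0 c s kG xG kH i j)"
    and ?C = "chain_labels c s kG xG i k"
  let ?B = "length ?C"
  have "vm n0 c s kG i * length ?P = vm n0 c s kG i * ?B"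
    unfolding vm_mult_length_composed_step_labels vm_mult_length_chain_labels[OF i ik] ..
  then have lenP: "length ?P = ?B" using vm_pos[OF G n0, where s=s and l=i] by simp
  have bound: "cmod (\<tau> (label_diag X (vm n0 c s kG i) (vd c i) (vd c k) ?P h)
        - \<tau> (label_diag X (vm n0 c s kG i) (vd c i) (vd c k) ?C h)) \<le> 4 * (real ?B - real (size A)) / real ?B"
    if "A \<subseteq># mset ?P" "A \<subseteq># mset ?C" for A
    by (rule tracial_label_diag_diff[OF tau _ vm_pos[OF G n0] h mc_norm_le_1_diag_bound[OF X h hn]
          valid_compose_labels[OF valid_step_labels[OF H n0 step_indices(3) step2 Xne] valid_step_labels[OF G n0 i fits1 Xne]]
          valid_chain_labels[OF G i ik] lenP refl that])
       (simp add: vm_mult_length_chain_labels[OF i ik])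
  have Bpos: "0 < ?B" using vm_mult_length_chain_labels[OF i ik, of n0 c s kG xG] vm_pos[OF G n0, where s=s and l=k]
    by (cases ?B) auto
  obtain A where A: "A \<subseteq># mset ?P" "A \<subseteq># mset ?C" "4 * (real ?B - real (size A)) / real ?B < 8 * \<epsilon>"
  proof (cases "\<epsilon> \<le> 1 / 2")
    case True
    then obtain A where A: "A \<subseteq># mset ?P" "A \<subseteq># mset ?C" "(1 - \<epsilon>) * (1 - \<epsilon>) * real ?B \<le> real (size A)"
      using common_blocks e by auto
    have "4 * (real ?B - real (size A)) / real ?B \<le> 4 * (1 - (1 - \<epsilon>) * (1 - \<epsilon>))"
      using A(3) Bpos by (simp add: field_simps)
    also have "\<dots> < 8 * \<epsilon>" using e by (simp add: algebra_simps)
    finally show ?thesis using A that by blast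
  next
    case False
    then show ?thesis using Bpos that[of "{#}"] by simp
  qed
  have "step_map X n0 c s kH xH kG j k (step_map X n0 c s kG xG kH i j h)
      = label_diag X (vm n0 c s kG i) (vd c i) (vd c k) ?P h"
    using fun_cong[OF step_maps_compose, of h] by simp
  moreover have "cmod (\<tau> (label_diag X (vm n0 c s kG i) (vd c i) (vd c k) ?P h)
        - \<tau> (label_diag X (vm n0 c s kG i) (vd c i) (vd c k) ?C h)) < 8 * \<epsilon>"
    using bound[OF A(1,2)] A(3) by linarith
  ultimately show ?thesis unfolding conn_maps_eq_label_diag[OF G n0 i ik] by simp
qed

end

section \<open>Interleaving the two systems\<close>

lemma alternating_pair:
  fixes X :: "'a::topological_space set"
  assumes G: "point_data X c kG xG" and H: "point_data X c kH xH" and n0: "1 \<le> n0"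
    and X: "compact X" "X \<noteq> {}" and idx: "1 \<le> idx t" and \<delta>: "0 < \<delta>"
    and step1: "good_step n0 c s kG kH (\<delta> / 8) (idx t) (idx (Suc t))"
    and step2: "step_fits n0 c s kH kG (idx (Suc t)) (idx (t + 2))"
    and \<psi>1: "\<psi> t = step_map X n0 c s kG xG kH (idx t) (idx (Suc t))"
    and \<psi>2: "\<psi> (Suc t) = step_map X n0 c s kH xH kG (idx (Suc t)) (idx (t + 2))"
  shows "is_diagonal X (vm n0 c s kG (idx t)) (vd c (idx t)) (vm n0 c s kH (idx (Suc t))) (vd c (idx (Suc t))) (\<psi> t)"
    and "\<forall>h\<in>MC X (vm n0 c s kG (idx t)) (vd c (idx t)).
          mc_norm X (vm n0 c s kG (idx t)) (vd c (idx t)) h \<le> 1 \<longrightarrow>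
          (\<forall>\<tau>. tracial_state X (vm n0 c s kG (idx (t + 2))) (vd c (idx (t + 2))) \<tau> \<longrightarrow>
             cmod (\<tau> (\<psi> (Suc t) (\<psi> t h)) - \<tau> (conn_maps X n0 c s kG xG (idx t) (idx (t + 2)) h)) < \<delta>)"
    and "\<exists>Lam.
        diag_decomp X (vm n0 c s kG (idx t)) (vd c (idx t))
                      (vm n0 c s kG (idx (t + 2))) (vd c (idx (t + 2))) (\<psi> (Suc t) \<circ> \<psi> t) Lam
      \<and> diag_decomp X (vm n0 c s kG (idx t)) (vd c (idx t))
                      (vm n0 c s kG (idx (t + 2))) (vd c (idx (t + 2)))
                      (conn_maps X n0 c s kG xG (idx t) (idx (t + 2))) Lam"
  using step_map_diagonal[OF G n0 idx conjunct1[OF step1[unfolded good_step_def]] X(2)]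
    step_maps_same_proj_part[OF G H n0 X(2) idx step1 step2]
    tracial_step_maps_close[OF G H n0 X(2) idx step1 step2 X(1)] \<delta>
  unfolding \<psi>1 \<psi>2 by auto

lemma strict_mono_chain_exists:
  fixes P :: "nat \<Rightarrow> nat \<Rightarrow> nat \<Rightarrow> bool"
  assumes ex: "\<And>t i. 1 \<le> i \<Longrightarrow> \<exists>j. P t i j" and less: "\<And>t i j. P t i j \<Longrightarrow> i < j"
  shows "\<exists>idx. idx 0 = 1 \<and> strict_mono idx \<and> (\<forall>t. P t (idx t) (idx (Suc t)))"
proof -
  define idx where "idx = rec_nat 1 (\<lambda>t i. SOME j. P t i j)"
  have idxS: "idx (Suc t) = (SOME j. P t (idx t) j)" for t unfolding idx_def by simp
  have step: "1 \<le> idx t \<and> P t (idx t) (idx (Suc t))" for t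
  proof (induction t)
    case 0
    show ?case using someI_ex[OF ex[of 1 0]] by (simp add: idx_def)
  next
    case (Suc t)
    then have "1 \<le> idx (Suc t)" using less by (meson le_less_trans less_imp_le)
    then show ?case using someI_ex[OF ex[of "idx (Suc t)" "Suc t"]] by (simp add: idxS)
  qed
  then have "strict_mono idx" using less by (intro strict_monoI_Suc) blast
  then show ?thesis using step by (intro exI[of _ idx]) (simp add: idx_def)
qed

lemma villadsen_dataD:
  assumes "villadsen_data X n0 c s k x"
  shows "compact X" "1 \<le> n0" "point_data X c k x" "X \<noteq> {}"
    and "(\<lambda>i. lim (\<lambda>j. \<Prod>l\<in>{i..i + j}. real (vn c s l) / real (vn c s l + k l))) \<longlonglongrightarrow> 1"
proof -
  show "compact X" "1 \<le> n0" "point_data X c k x"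
    and "(\<lambda>i. lim (\<lambda>j. \<Prod>l\<in>{i..i + j}. real (vn c s l) / real (vn c s l + k l))) \<longlonglongrightarrow> 1"
    using assms unfolding villadsen_data_def point_data_def by auto
  have "x 1 1 \<in> Xpow X (vd c 1)" using assms unfolding villadsen_data_def by auto
  then show "X \<noteq> {}" by (auto simp: vd_def Xpow_def)
qed

theorem lemma4p6:
  fixes X :: "'a::metric_space set" and n0 :: nat and c :: "nat \<Rightarrow> nat"
    and s :: "nat \<Rightarrow> nat \<Rightarrow> nat" and kE kF :: "nat \<Rightarrow> nat"
    and xE xF :: "nat \<Rightarrow> nat \<Rightarrow> nat \<Rightarrow> 'a" and \<delta> :: "nat \<Rightarrow> real"
  assumes dataE: "villadsen_data X n0 c s kE xE"
    and dataF: "villadsen_data X n0 c s kF xF"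
    and supernat_eq: "\<forall>p. prime p \<longrightarrow>
          supernat (\<lambda>l. vn c s l + kE l) p = supernat (\<lambda>l. vn c s l + kF l) p"
    and ratio: "(\<lambda>i. (\<Prod>l\<in>{1..i}. real (vn c s l + kE l)) / (\<Prod>l\<in>{1..i}. real (vn c s l + kF l)))
                  \<longlonglongrightarrow> 1"
    and \<delta>_dec: "\<forall>t. \<delta> (Suc t) < \<delta> t" and \<delta>_pos: "\<forall>t. 0 < \<delta> t"
    and \<delta>_sum: "summable \<delta>" "suminf \<delta> < 1"
  shows "\<exists>idx :: nat \<Rightarrow> nat. \<exists>\<psi> :: nat \<Rightarrow> 'a vmat \<Rightarrow> 'a vmat.
     idx 0 = 1 \<and> strict_mono idx
   \<and> (\<forall>t. even t \<longrightarrow>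
        is_diagonal X (vm n0 c s kE (idx t)) (vd c (idx t))
                      (vm n0 c s kF (idx (Suc t))) (vd c (idx (Suc t))) (\<psi> t))
   \<and> (\<forall>t. odd t \<longrightarrow>
        is_diagonal X (vm n0 c s kF (idx t)) (vd c (idx t))
                      (vm n0 c s kE (idx (Suc t))) (vd c (idx (Suc t))) (\<psi> t))
   \<and> (\<forall>t. even t \<longrightarrow>
        (\<forall>h\<in>MC X (vm n0 c s kE (idx t)) (vd c (idx t)).
           mc_norm X (vm n0 c s kE (idx t)) (vd c (idx t)) h \<le> 1 \<longrightarrow>
           (\<forall>\<tau>. tracial_state X (vm n0 c s kE (idx (t + 2))) (vd c (idx (t + 2))) \<tau> \<longrightarrow>
              cmod (\<tau> (\<psi> (Suc t) (\<psi> t h)) - \<tau> (conn_maps X n0 c s kE xE (idx t) (idx (t + 2)) h))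
                < \<delta> t)))
   \<and> (\<forall>t. odd t \<longrightarrow>
        (\<forall>h\<in>MC X (vm n0 c s kF (idx t)) (vd c (idx t)).
           mc_norm X (vm n0 c s kF (idx t)) (vd c (idx t)) h \<le> 1 \<longrightarrow>
           (\<forall>\<tau>. tracial_state X (vm n0 c s kF (idx (t + 2))) (vd c (idx (t + 2))) \<tau> \<longrightarrow>
              cmod (\<tau> (\<psi> (Suc t) (\<psi> t h)) - \<tau> (conn_maps X n0 c s kF xF (idx t) (idx (t + 2)) h))
                < \<delta> t)))
   \<and> (\<forall>t. even t \<longrightarrow> (\<exists>Lam.
        diag_decomp X (vm n0 c s kE (idx t)) (vd c (idx t))
                      (vm n0 c s kE (idx (t + 2))) (vd c (idx (t + 2))) (\<psi> (Suc t) \<circ> \<psi> t) Lam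
      \<and> diag_decomp X (vm n0 c s kE (idx t)) (vd c (idx t))
                      (vm n0 c s kE (idx (t + 2))) (vd c (idx (t + 2)))
                      (conn_maps X n0 c s kE xE (idx t) (idx (t + 2))) Lam))
   \<and> (\<forall>t. odd t \<longrightarrow> (\<exists>Lam.
        diag_decomp X (vm n0 c s kF (idx t)) (vd c (idx t))
                      (vm n0 c s kF (idx (t + 2))) (vd c (idx (t + 2))) (\<psi> (Suc t) \<circ> \<psi> t) Lam
      \<and> diag_decomp X (vm n0 c s kF (idx t)) (vd c (idx t))
                      (vm n0 c s kF (idx (t + 2))) (vd c (idx (t + 2)))
                      (conn_maps X n0 c s kF xF (idx t) (idx (t + 2))) Lam))"
proof -
  note E = villadsen_dataD[OF dataE] and F = villadsen_dataD[OF dataF]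
  have supF: "\<forall>p. prime p \<longrightarrow> supernat (\<lambda>l. vn c s l + kF l) p = supernat (\<lambda>l. vn c s l + kE l) p"
    using supernat_eq by simp
  define step where "step t = (if even t then good_step n0 c s kE kF (\<delta> t / 8) else good_step n0 c s kF kE (\<delta> t / 8))" for t
  have "\<exists>j. step t i j" if "1 \<le> i" for t i
    using good_step_exists[OF E(3) F(3) E(2) E(5) vm_ratio_tendsto(2)[OF ratio E(2)] supernat_eq _ that]
      good_step_exists[OF F(3) E(3) E(2) F(5) vm_ratio_tendsto(1)[OF ratio E(2)] supF _ that] \<delta>_pos
    unfolding step_def by simp
  moreover have "step t i j \<Longrightarrow> i < j" for t i j unfolding step_def good_step_def step_fits_def by (simp split: if_splits)
  ultimately obtain idx where idx: "idx 0 = 1" "strict_mono idx" "\<forall>t. step t (idx t) (idx (Suc t))"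
    using strict_mono_chain_exists[of step] by blast
  have idx1: "1 \<le> idx t" for t using idx(1) strict_mono_less_eq[OF idx(2), of 0 t] by simp
  define \<psi> where "\<psi> t = (if even t then step_map X n0 c s kE xE kF (idx t) (idx (Suc t))
                        else step_map X n0 c s kF xF kE (idx t) (idx (Suc t)))" for t
  have stepE: "even t \<Longrightarrow> good_step n0 c s kE kF (\<delta> t / 8) (idx t) (idx (Suc t))"
    and stepF: "odd t \<Longrightarrow> good_step n0 c s kF kE (\<delta> t / 8) (idx t) (idx (Suc t))" for t
    using spec[OF idx(3), of t] unfolding step_def by simp_all
  have fitsF: "even t \<Longrightarrow> step_fits n0 c s kF kE (idx (Suc t)) (idx (t + 2))"
    and fitsE: "odd t \<Longrightarrow> step_fits n0 c s kE kF (idx (Suc t)) (idx (t + 2))" for t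
    using stepF[of "Suc t"] stepE[of "Suc t"] unfolding good_step_def by (simp_all add: add_2_eq_Suc')
  have \<psi>: "even t \<Longrightarrow> \<psi> t = step_map X n0 c s kE xE kF (idx t) (idx (Suc t))"
    "even t \<Longrightarrow> \<psi> (Suc t) = step_map X n0 c s kF xF kE (idx (Suc t)) (idx (t + 2))"
    "odd t \<Longrightarrow> \<psi> t = step_map X n0 c s kF xF kE (idx t) (idx (Suc t))"
    "odd t \<Longrightarrow> \<psi> (Suc t) = step_map X n0 c s kE xE kF (idx (Suc t)) (idx (t + 2))" for t
    unfolding \<psi>_def by (simp_all add: add_2_eq_Suc')
  note pairE = alternating_pair[OF E(3) F(3) E(2) E(1) E(4) idx1 \<delta>_pos[rule_format] stepE fitsF \<psi>(1,2)]
    and pairF = alternating_pair[OF F(3) E(3) E(2) E(1) E(4) idx1 \<delta>_pos[rule_format] stepF fitsE \<psi>(3,4)]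
  show ?thesis
    by (intro exI[of _ idx] exI[of _ \<psi>] conjI allI impI idx(1,2)) (rule pairE pairF; assumption)+
qed

end
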